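(* Assume $z>w>x>y$, $w+x>z+y$, $w>0$, $z>0$, and that $G$ is connected. Fix an initial condition $\mathbf q(0)$ with all $q_i(0)\neq 0$, and let $N_C(0)=\{i:q_i(0)<0\}$ and $N_D(0)=\{i:q_i(0)>0\}$. Then: (1) For any network $G$ there exist behavioural parameters (time-invariant $\psi_i>0$, $\eta_i\in[0,1]$, and increasing functions $\lambda_i(t)>0$ with $\lambda_i(t)\to\infty$) such that all agents' actions converge to the risk-dominant action $D$. (2) If $N_D(0)$ contains no nonempty subset $S$ with cohesiveness $\min_{i\in S}|N_i\cap S|/d_i\ge\frac{2(z-x)}{z-x+w-y}$, then there exist behavioural parameters (of the same kind, possibly heterogeneous across agents) such that all agents' actions converge to the efficient action $C$.
   Context: There are $n$ agents on an undirected simple graph with symmetric adjacency matrix $G\in\{0,1\}^{n\times n}$, $G_{ii}=0$; $N_i=\{j:G_{ij}=1\}$, $d_i=|N_i|$. Actions are $C$ and $D$. The stage payoff to an agent playing the row action against a neighbour playing the column action is $u(C,C)=z$, $u(C,D)=y$, $u(D,C)=x$, $u(D,D)=w$. The state is $\mathbf q(t)\in\mathbb R^n$, $p_i(t)=1/(1+e^{-\lambda_i(t) q_i(t)})$ is the frequency with which $i$ plays $D$, and the dynamics are $$\dot q_i=-\psi_i q_i+\big(p_i+\eta_i(1-p_i)\big)\sum_{j\in N_i}\big(p_jw+(1-p_j)x\big)-\big(1-p_i+\eta_ip_i\big)\sum_{j\in N_i}\big(p_jy+(1-p_j)z\big).$$ "Actions converge to $D$" means $p_i(t)\to 1$ for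 all $i$; "converge to $C$" means $p_i(t)\to 0$ for all $i$. *)

theory Defs
  imports "HOL-Analysis.Analysis"
begin

definition simple_graph :: "nat \<Rightarrow> (nat \<Rightarrow> nat \<Rightarrow> bool) \<Rightarrow> bool" where
  "simple_graph n G \<longleftrightarrow> (\<forall>i<n. \<forall>j<n. G i j \<longleftrightarrow> G j i) \<and> (\<forall>i<n. \<not> G i i)"

definition nbrs :: "nat \<Rightarrow> (nat \<Rightarrow> nat \<Rightarrow> bool) \<Rightarrow> nat \<Rightarrow> nat set" where
  "nbrs n G i = {j. j < n \<and> G i j}"

definition deg :: "nat \<Rightarrow> (nat \<Rightarrow> nat \<Rightarrow> bool) \<Rightarrow> nat \<Rightarrow> nat" where
  "deg n G i = card (nbrs n G i)"

definition connected_graph :: "nat \<Rightarrow> (nat \<Rightarrow> nat \<Rightarrow> bool) \<Rightarrow> bool" where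
  "connected_graph n G \<longleftrightarrow>
     (\<forall>i<n. \<forall>j<n. (\<lambda>a b. a < n \<and> b < n \<and> G a b)\<^sup>*\<^sup>* i j)"

definition cohesiveness :: "nat \<Rightarrow> (nat \<Rightarrow> nat \<Rightarrow> bool) \<Rightarrow> nat set \<Rightarrow> real" where
  "cohesiveness n G S = Min ((\<lambda>i. real (card (nbrs n G i \<inter> S)) / real (deg n G i)) ` S)"

definition pD :: "real \<Rightarrow> real \<Rightarrow> real" where
  "pD lam q = 1 / (1 + exp (- lam * q))"

text \<open>Right-hand side of the dynamics for agent i at time t and state q.
  Payoffs: u(C,C)=z, u(C,D)=y, u(D,C)=x, u(D,D)=w.\<close>
definition field ::
  "nat \<Rightarrow> (nat \<Rightarrow> nat \<Rightarrow> bool) \<Rightarrow> real \<Rightarrow> real \<Rightarrow> real \<Rightarrow> real \<Rightarrow>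
   (nat \<Rightarrow> real) \<Rightarrow> (nat \<Rightarrow> real) \<Rightarrow> (nat \<Rightarrow> real \<Rightarrow> real) \<Rightarrow>
   real \<Rightarrow> (nat \<Rightarrow> real) \<Rightarrow> nat \<Rightarrow> real" where
  "field n G x y z w psi eta lam t q i =
     (let p = (\<lambda>j. pD (lam j t) (q j)) in
       - psi i * q i
       + (p i + eta i * (1 - p i)) * (\<Sum>j\<in>nbrs n G i. p j * w + (1 - p j) * x)
       - (1 - p i + eta i * p i) * (\<Sum>j\<in>nbrs n G i. p j * y + (1 - p j) * z))"

definition is_solution ::
  "nat \<Rightarrow> (nat \<Rightarrow> nat \<Rightarrow> bool) \<Rightarrow> real \<Rightarrow> real \<Rightarrow> real \<Rightarrow> real \<Rightarrow>
   (nat \<Rightarrow> real) \<Rightarrow> (nat \<Rightarrow> real) \<Rightarrow> (nat \<Rightarrow> real \<Rightarrow> real) \<Rightarrow>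
   (nat \<Rightarrow> real) \<Rightarrow> (real \<Rightarrow> nat \<Rightarrow> real) \<Rightarrow> bool" where
  "is_solution n G x y z w psi eta lam q0 q \<longleftrightarrow>
     (\<forall>i<n. q 0 i = q0 i) \<and>
     (\<forall>t\<ge>0. \<forall>i<n. ((\<lambda>s. q s i) has_real_derivative field n G x y z w psi eta lam t (q t) i)
                     (at t within {0..}))"

definition behavioural_params ::
  "nat \<Rightarrow> (nat \<Rightarrow> real) \<Rightarrow> (nat \<Rightarrow> real) \<Rightarrow> (nat \<Rightarrow> real \<Rightarrow> real) \<Rightarrow> bool" where
  "behavioural_params n psi eta lam \<longleftrightarrow>
     (\<forall>i<n. psi i > 0 \<and> 0 \<le> eta i \<and> eta i \<le> 1 \<and>
            (\<forall>t\<ge>0. lam i t > 0) \<and> strict_mono_on {0..} (lam i) \<and>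
            filterlim (lam i) at_top at_top)"

text \<open>Actions converge to D (target 1) or to C (target 0): there is a solution,
  and along every solution p_i(t) tends to the target for all agents.\<close>
definition actions_converge ::
  "nat \<Rightarrow> (nat \<Rightarrow> nat \<Rightarrow> bool) \<Rightarrow> real \<Rightarrow> real \<Rightarrow> real \<Rightarrow> real \<Rightarrow>
   (nat \<Rightarrow> real) \<Rightarrow> (nat \<Rightarrow> real) \<Rightarrow> (nat \<Rightarrow> real \<Rightarrow> real) \<Rightarrow>
   (nat \<Rightarrow> real) \<Rightarrow> real \<Rightarrow> bool" where
  "actions_converge n G x y z w psi eta lam q0 target \<longleftrightarrow>
     (\<exists>q. is_solution n G x y z w psi eta lam q0 q) \<and>
     (\<forall>q. is_solution n G x y z w psi eta lam q0 q \<longrightarrow>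
        (\<forall>i<n. ((\<lambda>t. pD (lam i t) (q t i)) \<longlongrightarrow> target) at_top))"

end

theory Submission
  imports Defs
begin

text \<open>
  All behavioural parameters are chosen with \<open>\<eta>\<^sub>i = 1\<close>. Then the dynamics read
  \<open>q\<^sub>i' = -\<psi>\<^sub>i q\<^sub>i + \<Sum>\<^bsub>j \<in> N\<^sub>i\<^esub> (x - z + (z - x + w - y) p\<^sub>j)\<close>, which is affine in the
  neighbours' frequencies \<open>p\<^sub>j\<close>; solutions exist by Picard iteration.

  Convergence to \<open>D\<close>: with sensitivities \<open>\<lambda>\<^sub>i(t) = \<epsilon>(1 + t)\<close>, \<open>\<epsilon>\<close> small, all \<open>p\<^sub>j\<close> stay close
  to \<open>1/2\<close> up to some time \<open>W\<close>. Since \<open>D\<close> is risk dominant, a neighbour playing \<open>D\<close> with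
  probability \<open>1/2\<close> pushes \<open>q\<^sub>i\<close> up, so every \<open>q\<^sub>i\<close> is positive at time \<open>W\<close>; from then on the
  positive orthant is invariant and \<open>\<lambda>\<^sub>i q\<^sub>i \<rightarrow> \<infinity>\<close>.

  Convergence to \<open>C\<close>: if no set of initial defectors is cohesive, they can be ranked so that each
  has fewer than the fraction \<open>2(z - x)/(z - x + w - y)\<close> of its neighbours among the defectors
  of equal or higher rank. Initial cooperators get a large \<open>\<psi>\<^sub>i\<close> and a steep \<open>\<lambda>\<^sub>i\<close> from the
  start, so they stay negative and play \<open>D\<close> with small probability. The defectors get the steep
  part of \<open>\<lambda>\<^sub>i\<close> one after another in rank order; once all lower ranked ones are negative, the
  drive of the next defector is negative, and a large \<open>\<psi>\<^sub>i\<close> makes it negative within half a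
  time slot. Afterwards the negative orthant is invariant and \<open>\<lambda>\<^sub>i q\<^sub>i \<rightarrow> -\<infinity>\<close>.
\<close>

section \<open>Picard iteration on the half line\<close>

lemma at_within_atLeastAtMost_eq_atLeast:
  "0 \<le> t \<Longrightarrow> t < T \<Longrightarrow> at t within {0..T} = at t within {0::real..}"
  by (rule at_within_nhd[where S="{..<T}"]) auto

lemma continuous_on_atLeast_if_continuous_on_atLeastAtMost:
  assumes "\<And>T. T \<ge> 0 \<Longrightarrow> continuous_on {0..T} f"
  shows "continuous_on {0::real..} f"
  unfolding continuous_on_eq_continuous_within
proof
  fix t :: real assume "t \<in> {0..}"
  then have "continuous (at t within {0..t+1}) f"
    using assms[of "t+1"] by (simp add: continuous_on_eq_continuous_within)
  then show "continuous (at t within {0..}) f"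
    using at_within_atLeastAtMost_eq_atLeast[of t "t+1"] \<open>t \<in> {0..}\<close> by simp
qed

lemma has_real_derivative_integral_atLeast:
  assumes "continuous_on {0::real..} g" "t \<ge> 0"
  shows "((\<lambda>u. integral {0..u} g) has_real_derivative g t) (at t within {0..})"
proof -
  have "continuous_on {0..t+1} g" using assms(1) by (rule continuous_on_subset) auto
  from integral_has_real_derivative[OF this, of t] assms(2)
  have "((\<lambda>u. integral {0..u} g) has_real_derivative g t) (at t within {0..t+1})" by simp
  then show ?thesis using at_within_atLeastAtMost_eq_atLeast[of t "t+1"] assms(2) by simp
qed

lemma continuous_on_integral_atLeast:
  fixes g :: "real \<Rightarrow> real"
  assumes "continuous_on {0..} g"
  shows "continuous_on {0..} (\<lambda>u. integral {0..u} g)"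
  unfolding continuous_on_eq_continuous_within
  using has_real_derivative_integral_atLeast[OF assms] DERIV_continuous by blast

lemma integral_monomial:
  assumes "0 \<le> t"
  shows "integral {0..t} (\<lambda>s. c * s ^ k) = c * t ^ Suc k / Suc k"
proof -
  have "((\<lambda>s. c * s ^ k) has_integral (c * t ^ Suc k / Suc k - c * 0 ^ Suc k / Suc k)) {0..t}"
  proof (rule fundamental_theorem_of_calculus)
    fix s :: real
    show "((\<lambda>s. c * s ^ Suc k / Suc k) has_vector_derivative c * s ^ k) (at s within {0..t})"
      unfolding has_real_derivative_iff_has_vector_derivative[symmetric]
      by (rule derivative_eq_intros refl | simp)+
  qed (use assms in simp)
  then show ?thesis by (metis (no_types) integral_unique diff_zero mult_zero_right power_0_Suc div_0)
qed

locale picard_problem =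
  fixes n :: nat and F :: "real \<Rightarrow> (nat \<Rightarrow> real) \<Rightarrow> nat \<Rightarrow> real" and v0 :: "nat \<Rightarrow> real"
  assumes continuous_F: "\<And>u i. i < n \<Longrightarrow> (\<And>j. j < n \<Longrightarrow> continuous_on {0..} (\<lambda>t. u t j))
                   \<Longrightarrow> continuous_on {0..} (\<lambda>t. F t (u t) i)"
    and lipschitz_F: "\<And>T. T \<ge> 0 \<Longrightarrow> \<exists>L\<ge>0. \<forall>t\<in>{0..T}. \<forall>u v. \<forall>i<n.
                  \<bar>F t u i - F t v i\<bar> \<le> L * (\<Sum>j<n. \<bar>u j - v j\<bar>)"
    and bounded_F_initial: "\<exists>C. \<forall>t\<ge>0. \<forall>i<n. \<bar>F t v0 i\<bar> \<le> C"
begin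

definition iterate :: "nat \<Rightarrow> real \<Rightarrow> nat \<Rightarrow> real" where
  "iterate = rec_nat (\<lambda>t i. v0 i) (\<lambda>k Q t i. v0 i + integral {0..t} (\<lambda>s. F s (Q s) i))"

lemma iterate_0 [simp]: "iterate 0 t = v0"
  by (simp add: iterate_def fun_eq_iff)

lemma iterate_Suc:
  "iterate (Suc k) t i = v0 i + integral {0..t} (\<lambda>s. F s (iterate k s) i)"
  by (simp add: iterate_def)

lemma continuous_on_iterate: "i < n \<Longrightarrow> continuous_on {0..} (\<lambda>t. iterate k t i)"
proof (induction k arbitrary: i)
  case (Suc k)
  then have "continuous_on {0..} (\<lambda>t. F t (iterate k t) i)" by (intro continuous_F) auto
  then show ?case unfolding iterate_Suc by (intro continuous_intros continuous_on_integral_atLeast)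
qed simp

lemma continuous_on_F_iterate: "i < n \<Longrightarrow> continuous_on {0..} (\<lambda>s. F s (iterate k s) i)"
  by (intro continuous_F continuous_on_iterate)

lemma integrable_F_iterate: "i < n \<Longrightarrow> (\<lambda>s. F s (iterate k s) i) integrable_on {0..t}"
  by (rule integrable_continuous_real, rule continuous_on_subset[OF continuous_on_F_iterate]) auto

abbreviation increment :: "nat \<Rightarrow> real \<Rightarrow> real" where
  "increment k t \<equiv> \<Sum>j<n. \<bar>iterate (Suc k) t j - iterate k t j\<bar>"

lemma increment_0_le:
  assumes "\<And>s i. 0 \<le> s \<Longrightarrow> i < n \<Longrightarrow> \<bar>F s v0 i\<bar> \<le> C0" "0 \<le> t"
  shows "increment 0 t \<le> real n * C0 * t"
proof -
  have "\<bar>iterate 1 t j - iterate 0 t j\<bar> \<le> C0 * t" if "j < n" for j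
  proof -
    have "\<bar>iterate 1 t j - iterate 0 t j\<bar> = \<bar>integral {0..t} (\<lambda>s. F s v0 j)\<bar>"
      by (simp add: iterate_Suc)
    also have "\<dots> \<le> integral {0..t} (\<lambda>s. C0)"
      using integral_norm_bound_integral[of "\<lambda>s. F s v0 j" "{0..t}" "\<lambda>s. C0"]
        integrable_F_iterate[OF that, of 0 t] assms(1)[OF _ that] assms(2) by auto
    finally show ?thesis using assms(2) by (simp add: mult.commute)
  qed
  then have "increment 0 t \<le> (\<Sum>j<n. C0 * t)" by (intro sum_mono) auto
  then show ?thesis by simp
qed

lemma increment_Suc_le:
  assumes "\<forall>s\<in>{0..t}. \<forall>u v. \<forall>i<n. \<bar>F s u i - F s v i\<bar> \<le> L * (\<Sum>j<n. \<bar>u j - v j\<bar>)"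
  shows "increment (Suc k) t \<le> real n * integral {0..t} (\<lambda>s. L * increment k s)"
proof -
  have "\<bar>iterate (Suc (Suc k)) t j - iterate (Suc k) t j\<bar> \<le> integral {0..t} (\<lambda>s. L * increment k s)"
    if j: "j < n" for j
  proof -
    have "iterate (Suc (Suc k)) t j - iterate (Suc k) t j
           = integral {0..t} (\<lambda>s. F s (iterate (Suc k) s) j - F s (iterate k s) j)"
      by (simp add: iterate_Suc integral_diff integrable_F_iterate[OF j])
    moreover have "\<bar>F s (iterate (Suc k) s) j - F s (iterate k s) j\<bar> \<le> L * increment k s"
      if "s \<in> {0..t}" for s
      using assms that j by auto
    moreover have "(\<lambda>s. L * increment k s) integrable_on {0..t}"
      by (intro integrable_continuous_real continuous_intros continuous_on_subset[OF continuous_on_iterate])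
         auto
    ultimately show ?thesis
      using integral_norm_bound_integral[of "\<lambda>s. F s (iterate (Suc k) s) j - F s (iterate k s) j"
          "{0..t}" "\<lambda>s. L * increment k s"] integrable_F_iterate[OF j]
      by (simp add: integrable_diff)
  qed
  then show ?thesis
    using sum_mono[of "{..<n}"] by (metis (no_types, lifting) card_lessThan lessThan_iff sum_constant)
qed

lemma increment_bound:
  assumes "T \<ge> 0"
  obtains C a where "C \<ge> 0" "a \<ge> 0" "\<And>k t. t \<in> {0..T} \<Longrightarrow> increment k t \<le> C * (a * t) ^ k / fact k"
proof -
  obtain L where L: "L \<ge> 0" "\<forall>t\<in>{0..T}. \<forall>u v. \<forall>i<n. \<bar>F t u i - F t v i\<bar> \<le> L * (\<Sum>j<n. \<bar>u j - v j\<bar>)"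
    using lipschitz_F[OF assms] by blast
  obtain C0 where C0: "\<And>t i. t \<ge> 0 \<Longrightarrow> i < n \<Longrightarrow> \<bar>F t v0 i\<bar> \<le> C0" "C0 \<ge> 0"
    using bounded_F_initial by (metis abs_ge_zero order.trans)
  define a where "a = real n * L"
  define C where "C = real n * C0 * T"
  have "increment k t \<le> C * (a * t) ^ k / fact k" if "t \<in> {0..T}" for k t
    using that
  proof (induction k arbitrary: t)
    case 0
    then have "real n * C0 * t \<le> C" using C0(2) by (auto simp: C_def intro: mult_left_mono)
    then show ?case using increment_0_le[OF C0(1)] 0 by force
  next
    case (Suc k)
    have "(\<lambda>s. L * increment k s) integrable_on {0..t}"
      by (intro integrable_continuous_real continuous_intros continuous_on_subset[OF continuous_on_iterate])
         auto
    then have "integral {0..t} (\<lambda>s. L * increment k s)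
               \<le> integral {0..t} (\<lambda>s. (L * C * a ^ k / fact k) * s ^ k)"
    proof (rule integral_le)
      fix s assume "s \<in> {0..t}"
      then have "L * increment k s \<le> L * (C * (a * s) ^ k / fact k)"
        using Suc.IH Suc.prems L(1) by (intro mult_left_mono) auto
      then show "L * increment k s \<le> (L * C * a ^ k / fact k) * s ^ k"
        by (simp add: power_mult_distrib)
    qed (intro integrable_continuous_real continuous_intros)
    also have "\<dots> = (L * C * a ^ k / fact k) * t ^ Suc k / Suc k"
      using Suc.prems by (intro integral_monomial) auto
    finally have integral_le: "integral {0..t} (\<lambda>s. L * increment k s)
                                 \<le> (L * C * a ^ k / fact k) * t ^ Suc k / Suc k" .
    have "increment (Suc k) t \<le> real n * integral {0..t} (\<lambda>s. L * increment k s)"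
      using L(2) Suc.prems by (intro increment_Suc_le) auto
    also have "\<dots> \<le> real n * ((L * C * a ^ k / fact k) * t ^ Suc k / Suc k)"
      using integral_le by (intro mult_left_mono) auto
    also have "\<dots> = C * (a * t) ^ Suc k / fact (Suc k)"
      by (simp add: a_def power_mult_distrib field_simps)
    finally show ?case .
  qed
  moreover have "C \<ge> 0" "a \<ge> 0" using L C0 assms by (auto simp: a_def C_def)
  ultimately show ?thesis using that by blast
qed

definition solution :: "real \<Rightarrow> nat \<Rightarrow> real" where
  "solution t i = v0 i + (\<Sum>m. iterate (Suc m) t i - iterate m t i)"

lemma uniform_limit_iterate:
  assumes "T \<ge> 0" "i < n"
  shows "uniform_limit {0..T} (\<lambda>k t. iterate k t i) (\<lambda>t. solution t i) sequentially"
proof -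
  obtain C a where Ca: "C \<ge> 0" "a \<ge> 0" "\<And>k t. t \<in> {0..T} \<Longrightarrow> increment k t \<le> C * (a * t) ^ k / fact k"
    using increment_bound[OF assms(1)] by metis
  define M where "M m = C * (a * T) ^ m / fact m" for m
  have "M = (\<lambda>m. C * (inverse (fact m) * (a * T) ^ m))"
    by (simp add: M_def fun_eq_iff divide_inverse mult_ac)
  then have summable: "summable M" by (simp add: summable_mult summable_exp)
  have bound: "norm (iterate (Suc m) t i - iterate m t i) \<le> M m" if "t \<in> {0..T}" for m t
  proof -
    have "norm (iterate (Suc m) t i - iterate m t i) \<le> increment m t"
      using assms(2) by (auto intro: member_le_sum)
    also have "\<dots> \<le> M m"
      using Ca that unfolding M_def
      by (intro order.trans[OF Ca(3)] divide_right_mono mult_left_mono power_mono) auto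
    finally show ?thesis .
  qed
  have "uniform_limit {0..T} (\<lambda>k t. \<Sum>m<k. iterate (Suc m) t i - iterate m t i)
        (\<lambda>t. \<Sum>m. iterate (Suc m) t i - iterate m t i) sequentially"
    by (rule Weierstrass_m_test[OF bound summable])
  moreover have "(\<Sum>m<k. iterate (Suc m) t i - iterate m t i) = iterate k t i - v0 i" for k t
    using sum_lessThan_telescope[of "\<lambda>m. iterate m t i" k] by simp
  ultimately show ?thesis
    unfolding uniform_limit_iff solution_def by (simp add: dist_real_def algebra_simps)
qed

lemma continuous_on_solution:
  assumes "i < n"
  shows "continuous_on {0..} (\<lambda>t. solution t i)"
proof (rule continuous_on_atLeast_if_continuous_on_atLeastAtMost)
  fix T :: real assume "T \<ge> 0"
  show "continuous_on {0..T} (\<lambda>t. solution t i)"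
  proof (rule uniform_limit_theorem[OF _ uniform_limit_iterate[OF \<open>T \<ge> 0\<close> assms]])
    show "\<forall>\<^sub>F k in sequentially. continuous_on {0..T} (\<lambda>t. iterate k t i)"
      using continuous_on_iterate[OF assms]
      by (intro always_eventually allI, rule continuous_on_subset) auto
  qed simp
qed

lemma uniform_limit_F_iterate:
  assumes "t \<ge> 0" "i < n"
  shows "uniform_limit {0..t} (\<lambda>k s. F s (iterate k s) i) (\<lambda>s. F s (solution s) i) sequentially"
  unfolding uniform_limit_iff
proof (intro allI impI)
  fix e :: real assume "e > 0"
  obtain L where L: "L \<ge> 0" "\<forall>s\<in>{0..t}. \<forall>u v. \<forall>i<n. \<bar>F s u i - F s v i\<bar> \<le> L * (\<Sum>j<n. \<bar>u j - v j\<bar>)"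
    using lipschitz_F[OF assms(1)] by blast
  define e' where "e' = e / (L * n + 1)"
  have "L * n + 1 > 0" using L by (simp add: add_nonneg_pos)
  then have "e' > 0" "(L * n) * e' < e" using \<open>e > 0\<close> by (auto simp: e'_def field_simps)
  have "\<forall>j\<in>{..<n}. \<forall>\<^sub>F k in sequentially. \<forall>s\<in>{0..t}. dist (iterate k s j) (solution s j) < e'"
    using uniform_limit_iterate[OF assms(1)] \<open>e' > 0\<close> unfolding uniform_limit_iff by blast
  then have "\<forall>\<^sub>F k in sequentially. \<forall>j\<in>{..<n}. \<forall>s\<in>{0..t}. dist (iterate k s j) (solution s j) < e'"
    by (simp add: eventually_ball_finite)
  then show "\<forall>\<^sub>F k in sequentially. \<forall>s\<in>{0..t}. dist (F s (iterate k s) i) (F s (solution s) i) < e"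
  proof eventually_elim
    case (elim k)
    show ?case
    proof
      fix s assume s: "s \<in> {0..t}"
      have "\<bar>F s (iterate k s) i - F s (solution s) i\<bar> \<le> L * (\<Sum>j<n. \<bar>iterate k s j - solution s j\<bar>)"
        using L(2) s assms(2) by blast
      also have "\<dots> \<le> L * (\<Sum>j<n. e')"
        using elim s L(1) by (intro mult_left_mono sum_mono) (auto simp: dist_real_def less_imp_le)
      also have "\<dots> < e" using \<open>(L * n) * e' < e\<close> by simp
      finally show "dist (F s (iterate k s) i) (F s (solution s) i) < e" by (simp add: dist_real_def)
    qed
  qed
qed

lemma solution_integral_equation:
  assumes "t \<ge> 0" "i < n"
  shows "solution t i = v0 i + integral {0..t} (\<lambda>s. F s (solution s) i)"
proof -
  have "continuous_on {0..t} (\<lambda>s. F s (iterate k s) i)" for k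
    using continuous_on_F_iterate[OF assms(2)] by (rule continuous_on_subset) auto
  then obtain I J where IJ: "\<And>k. ((\<lambda>s. F s (iterate k s) i) has_integral I k) {0..t}"
      "((\<lambda>s. F s (solution s) i) has_integral J) {0..t}" "I \<longlonglongrightarrow> J"
    using uniform_limit_integral[OF uniform_limit_F_iterate[OF assms]] by auto
  have "integral {0..t} (\<lambda>s. F s (iterate k s) i) = I k" for k
    using IJ(1) by (rule integral_unique)
  then have "(\<lambda>k. iterate (Suc k) t i) \<longlonglongrightarrow> v0 i + J"
    unfolding iterate_Suc using IJ(3) by (simp add: tendsto_add)
  moreover have "(\<lambda>k. iterate (Suc k) t i) \<longlonglongrightarrow> solution t i"
    using tendsto_uniform_limitI[OF uniform_limit_iterate[OF assms(1,2)], of t] assms(1)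
    by (simp add: LIMSEQ_Suc[of "\<lambda>k. iterate k t i"])
  ultimately have "solution t i = v0 i + J" by (rule LIMSEQ_unique[rotated])
  then show ?thesis using IJ(2) by (simp add: integral_unique)
qed

theorem solution_exists:
  "\<exists>q. (\<forall>i<n. q 0 i = v0 i) \<and>
       (\<forall>t\<ge>0. \<forall>i<n. ((\<lambda>s. q s i) has_real_derivative F t (q t) i) (at t within {0..}))"
proof (intro exI[of _ solution] conjI allI impI)
  fix i assume "i < n"
  then show "solution 0 i = v0 i" using solution_integral_equation[of 0 i] by simp
next
  fix t :: real and i assume t: "t \<ge> 0" and i: "i < n"
  have "continuous_on {0..} (\<lambda>s. F s (solution s) i)"
    using i continuous_on_solution by (intro continuous_F)
  from DERIV_add[OF DERIV_const has_real_derivative_integral_atLeast[OF this t]]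
  have "((\<lambda>s. v0 i + integral {0..s} (\<lambda>s. F s (solution s) i)) has_real_derivative F t (solution t) i)
         (at t within {0..})" by simp
  then show "((\<lambda>s. solution s i) has_real_derivative F t (solution t) i) (at t within {0..})"
    by (rule has_field_derivative_transform_within[where d=1])
       (use solution_integral_equation t i in auto)
qed

end

section \<open>Differential inequalities\<close>

lemma linear_differential_inequality_upper:
  fixes u u' :: "real \<Rightarrow> real"
  assumes "a \<le> b" and "\<psi> > 0"
    and deriv: "\<And>t. a < t \<Longrightarrow> t < b \<Longrightarrow> (u has_real_derivative u' t) (at t)"
    and "continuous_on {a..b} u"
    and ineq: "\<And>t. a < t \<Longrightarrow> t < b \<Longrightarrow> u' t \<le> - \<psi> * u t + m"
  shows "u b \<le> m/\<psi> + (u a - m/\<psi>) * exp (- \<psi> * (b - a))"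
proof -
  define g where "g t = - (exp (\<psi> * t) * (u t - m/\<psi>))" for t
  have "g a \<le> g b"
  proof (rule DERIV_nonneg_imp_increasing_open[OF \<open>a \<le> b\<close>])
    fix t assume t: "a < t" "t < b"
    have "(g has_real_derivative - (exp (\<psi> * t) * \<psi> * (u t - m/\<psi>) + exp (\<psi> * t) * u' t)) (at t)"
      unfolding g_def by (rule derivative_eq_intros deriv[OF t] refl | simp)+
    moreover have "exp (\<psi> * t) * \<psi> * (u t - m/\<psi>) + exp (\<psi> * t) * u' t
                     = exp (\<psi> * t) * (\<psi> * u t - m + u' t)"
      using \<open>\<psi> > 0\<close> by (simp add: field_simps)
    moreover have "exp (\<psi> * t) * (\<psi> * u t - m + u' t) \<le> 0"
      using ineq[OF t] by (intro mult_nonneg_nonpos) auto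
    ultimately show "\<exists>y. (g has_real_derivative y) (at t) \<and> 0 \<le> y" by auto
  qed (unfold g_def, intro continuous_intros assms(4))
  then have "exp (\<psi> * b) * (u b - m/\<psi>) \<le> exp (\<psi> * a) * (u a - m/\<psi>)" by (simp add: g_def)
  then have "u b - m/\<psi> \<le> (u a - m/\<psi>) * (exp (\<psi> * a) / exp (\<psi> * b))"
    by (simp add: le_divide_eq mult.commute)
  also have "exp (\<psi> * a) / exp (\<psi> * b) = exp (- \<psi> * (b - a))"
    by (simp add: exp_diff[symmetric] algebra_simps)
  finally show ?thesis by simp
qed

lemma linear_differential_inequality_lower:
  fixes u u' :: "real \<Rightarrow> real"
  assumes "a \<le> b" and "\<psi> > 0"
    and deriv: "\<And>t. a < t \<Longrightarrow> t < b \<Longrightarrow> (u has_real_derivative u' t) (at t)"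
    and "continuous_on {a..b} u"
    and ineq: "\<And>t. a < t \<Longrightarrow> t < b \<Longrightarrow> - \<psi> * u t + m \<le> u' t"
  shows "m/\<psi> + (u a - m/\<psi>) * exp (- \<psi> * (b - a)) \<le> u b"
proof -
  have "- u b \<le> (- m)/\<psi> + (- u a - (- m)/\<psi>) * exp (- \<psi> * (b - a))"
    by (rule linear_differential_inequality_upper[OF assms(1,2), of "\<lambda>t. - u t" "\<lambda>t. - u' t"])
       (use assms in \<open>force intro: derivative_intros continuous_intros\<close>)+
  then show ?thesis by (simp add: algebra_simps)
qed

lemma first_entrance_time:
  fixes f :: "nat \<Rightarrow> real \<Rightarrow> real"
  assumes "finite D" and cont: "\<And>j. j \<in> D \<Longrightarrow> continuous_on {a j..b} (f j)"
    and "k \<in> D" "a k \<le> t" "t \<le> b" "0 \<le> f k t"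
  obtains k' t' where "k' \<in> D" "a k' \<le> t'" "t' \<le> b" "0 \<le> f k' t'"
    and "\<And>j s. j \<in> D \<Longrightarrow> a j \<le> s \<Longrightarrow> s < t' \<Longrightarrow> f j s < 0"
proof -
  define E where "E = (\<Union>j\<in>D. {s \<in> {a j..b}. 0 \<le> f j s})"
  have "bdd_below {s \<in> {a j..b}. 0 \<le> f j s}" for j
    by (rule bdd_belowI[of _ "a j"]) auto
  then have "bdd_below E" unfolding E_def using \<open>finite D\<close> by simp
  moreover have "closed E" unfolding E_def
    by (intro closed_UN \<open>finite D\<close> ballI continuous_on_closed_Collect_le cont continuous_on_const) auto
  moreover have "t \<in> E" unfolding E_def using assms(3-6) by (intro UN_I[of k]) auto
  ultimately have "Inf E \<in> E" using closed_contains_Inf by blast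
  then obtain k' where "k' \<in> D" "Inf E \<in> {s \<in> {a k'..b}. 0 \<le> f k' s}" unfolding E_def by blast
  moreover have "f j s < 0" if "j \<in> D" "a j \<le> s" "s < Inf E" for j s
  proof (rule ccontr)
    assume "\<not> f j s < 0"
    then have "s \<in> E" unfolding E_def using that \<open>Inf E \<in> {s \<in> {a k'..b}. 0 \<le> f k' s}\<close> by force
    then show False using cInf_lower[OF _ \<open>bdd_below E\<close>] that(3) by fastforce
  qed
  ultimately show ?thesis using that by auto
qed

lemma last_exit_time:
  fixes g :: "real \<Rightarrow> real"
  assumes "continuous_on {a..b} g" "a \<le> b" "0 \<le> g a"
  obtains s where "a \<le> s" "s \<le> b" "0 \<le> g s" "\<And>r. s < r \<Longrightarrow> r \<le> b \<Longrightarrow> g r < 0"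
proof -
  define E where "E = {s \<in> {a..b}. 0 \<le> g s}"
  have "closed E" unfolding E_def
    by (intro continuous_on_closed_Collect_le assms(1) continuous_on_const) auto
  moreover have "a \<in> E" "bdd_above E" using assms(2,3) unfolding E_def by (auto intro: bdd_aboveI[of _ b])
  ultimately have "Sup E \<in> E" using closed_contains_Sup by blast
  moreover have "g r < 0" if "Sup E < r" "r \<le> b" for r
  proof (rule ccontr)
    assume "\<not> g r < 0"
    then have "r \<in> E" unfolding E_def using that \<open>Sup E \<in> E\<close> by (auto simp: E_def)
    then show False using cSup_upper[OF _ \<open>bdd_above E\<close>] that(1) by fastforce
  qed
  ultimately show ?thesis using that unfolding E_def by auto
qed

lemma lower_barrier_invariant:
  fixes u u' :: "real \<Rightarrow> nat \<Rightarrow> real" and c c' :: "nat \<Rightarrow> real"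
  assumes cont: "\<And>i. i < n \<Longrightarrow> continuous_on {T..} (\<lambda>t. u t i)"
    and deriv: "\<And>i t. i < n \<Longrightarrow> T < t \<Longrightarrow> ((\<lambda>s. u s i) has_real_derivative u' t i) (at t)"
    and start: "\<And>i. i < n \<Longrightarrow> c' i < u T i" and floor: "\<And>i. i < n \<Longrightarrow> c i < c' i"
    and push: "\<And>t i. T < t \<Longrightarrow> (\<forall>j<n. c j \<le> u t j) \<Longrightarrow> i < n \<Longrightarrow> u t i \<le> c' i \<Longrightarrow> 0 < u' t i"
  shows "\<forall>t\<ge>T. \<forall>i<n. c i \<le> u t i"
proof (rule ccontr)
  assume "\<not> ?thesis"
  then obtain t2 k where t2: "T \<le> t2" "k < n" "0 \<le> c k - u t2 k" by force
  have cont': "continuous_on {T..t2} (\<lambda>t. c j - u t j)" if "j \<in> {..<n}" for j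
    using that by (intro continuous_intros continuous_on_subset[OF cont]) auto
  obtain j0 \<tau> where "j0 \<in> {..<n}" "T \<le> \<tau>" "\<tau> \<le> t2" "0 \<le> c j0 - u \<tau> j0"
    and before: "\<And>j s. j \<in> {..<n} \<Longrightarrow> T \<le> s \<Longrightarrow> s < \<tau> \<Longrightarrow> c j - u s j < 0"
    by (rule first_entrance_time[where D = "{..<n}" and a = "\<lambda>_. T" and f = "\<lambda>j t. c j - u t j"
          and k = k and t = t2, OF finite_lessThan cont']) (use t2 in auto)
  then have j0: "j0 < n" "T \<le> \<tau>" "u \<tau> j0 \<le> c j0" by auto
  have "T < \<tau>" using start[OF j0(1)] floor[OF j0(1)] j0 by (cases "T = \<tau>") auto
  have cont_j0: "continuous_on {T..\<tau>} (\<lambda>t. u t j0 - c' j0)"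
    by (intro continuous_intros continuous_on_subset[OF cont[OF j0(1)]]) auto
  obtain \<sigma> where \<sigma>: "T \<le> \<sigma>" "\<sigma> \<le> \<tau>" "0 \<le> u \<sigma> j0 - c' j0"
    and after: "\<And>s. \<sigma> < s \<Longrightarrow> s \<le> \<tau> \<Longrightarrow> u s j0 - c' j0 < 0"
    by (rule last_exit_time[OF cont_j0]) (use \<open>T < \<tau>\<close> start[OF j0(1)] in auto)
  have "u \<sigma> j0 \<le> u \<tau> j0"
  proof (rule DERIV_nonneg_imp_increasing_open[OF \<sigma>(2)])
    fix s assume s: "\<sigma> < s" "s < \<tau>"
    have "\<forall>j<n. c j \<le> u s j" using before s \<sigma>(1) by (auto intro: less_imp_le)
    moreover have "u s j0 \<le> c' j0" using after[of s] s by simp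
    ultimately have "0 < u' s j0" using s \<sigma>(1) j0(1) by (intro push) auto
    then show "\<exists>y. ((\<lambda>s. u s j0) has_real_derivative y) (at s) \<and> 0 \<le> y"
      using deriv[OF j0(1), of s] s \<sigma> by (intro exI[of _ "u' s j0"]) auto
  qed (use \<sigma> in \<open>intro continuous_on_subset[OF cont[OF j0(1)]], auto\<close>)
  then show False using \<sigma> j0 floor[OF j0(1)] by simp
qed

lemma exp_neg_le_four_div_square:
  fixes s :: real
  assumes "s > 0"
  shows "exp (- s) \<le> 4 / s\<^sup>2"
proof -
  have "s/2 \<le> exp (s/2)" using exp_ge_add_one_self[of "s/2"] by linarith
  then have "(s/2)\<^sup>2 \<le> exp (s/2) ^ 2" using assms by (intro power_mono) auto
  also have "exp (s/2) ^ 2 = exp s" by (simp add: power2_eq_square exp_add[symmetric])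
  finally have "s\<^sup>2/4 \<le> exp s" by (simp add: power_divide)
  then have "1 / exp s \<le> 1 / (s\<^sup>2/4)" using assms by (intro divide_left_mono) auto
  then show ?thesis by (simp add: exp_minus inverse_eq_divide)
qed

lemma exp_decay_le_inverse:
  fixes b h \<mu> \<psi> :: real
  assumes "h > 0" "b \<ge> 0" "\<mu> > 0" "\<psi> \<ge> 8 * (b + \<mu>) / (\<mu> * h\<^sup>2)"
  shows "(b + \<mu>) * exp (- \<psi> * h) \<le> \<mu> / (2 * \<psi>)"
proof -
  have "\<psi> > 0" using assms by (smt (verit) divide_pos_pos mult_pos_pos zero_less_power)
  have "8 * (b + \<mu>) \<le> \<psi> * (\<mu> * h\<^sup>2)" using assms by (simp add: divide_le_eq)
  have "(b + \<mu>) * exp (- \<psi> * h) \<le> (b + \<mu>) * (4 / (\<psi> * h)\<^sup>2)"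
    using exp_neg_le_four_div_square[of "\<psi> * h"] \<open>\<psi> > 0\<close> assms by (intro mult_left_mono) auto
  also have "\<dots> \<le> \<mu> / (2 * \<psi>)"
  proof -
    have "8 * (b + \<mu>) * \<psi> \<le> \<psi> * (\<mu> * h\<^sup>2) * \<psi>"
      using \<open>8 * (b + \<mu>) \<le> \<psi> * (\<mu> * h\<^sup>2)\<close> \<open>\<psi> > 0\<close> by (intro mult_right_mono) auto
    then show ?thesis using \<open>\<psi> > 0\<close> assms by (simp add: field_simps power2_eq_square)
  qed
  finally show ?thesis .
qed

lemma linear_decay_after_delay:
  fixes u u' :: "real \<Rightarrow> real"
  assumes "0 \<le> h" "a + h \<le> b" "\<psi> > 0" "\<mu> \<ge> 0" "u a \<le> B" "B \<ge> 0"
    and deriv: "\<And>t. a < t \<Longrightarrow> t < b \<Longrightarrow> (u has_real_derivative u' t) (at t)"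
    and "continuous_on {a..b} u"
    and ineq: "\<And>t. a < t \<Longrightarrow> t < b \<Longrightarrow> u' t \<le> - \<psi> * u t - \<mu>"
  shows "u b \<le> - \<mu>/\<psi> + (B + \<mu>/\<psi>) * exp (- \<psi> * h)"
proof -
  have "u b \<le> (- \<mu>)/\<psi> + (u a - (- \<mu>)/\<psi>) * exp (- \<psi> * (b - a))"
    using assms(1,2) ineq by (intro linear_differential_inequality_upper[OF _ assms(3) deriv assms(8)]) auto
  moreover have "0 \<le> B + \<mu>/\<psi>" using assms(3,4,6) by simp
  moreover have "(u a - (- \<mu>)/\<psi>) * exp (- \<psi> * (b - a)) \<le> (B + \<mu>/\<psi>) * exp (- \<psi> * h)"
  proof (cases "u a - (- \<mu>)/\<psi> \<le> 0")
    case True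
    then have "(u a - (- \<mu>)/\<psi>) * exp (- \<psi> * (b - a)) \<le> 0" by (simp add: mult_nonpos_nonneg)
    also have "0 \<le> (B + \<mu>/\<psi>) * exp (- \<psi> * h)" using \<open>0 \<le> B + \<mu>/\<psi>\<close> by simp
    finally show ?thesis .
  next
    case False
    have "exp (- \<psi> * (b - a)) \<le> exp (- \<psi> * h)" using assms(2,3) by simp
    then show ?thesis using False \<open>0 \<le> B + \<mu>/\<psi>\<close> assms(5) by (intro mult_mono) auto
  qed
  ultimately show ?thesis by simp
qed

text \<open>At the first time some agent \<open>k\<close> is back at \<open>-L\<close> after its release time \<open>\<sigma> k\<close>, it has been
  driven down since time \<open>\<sigma> k - h\<close>, which by \<open>fast\<close> brings it below \<open>-L\<close>.\<close>

lemma staggered_descent: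
  fixes u u' :: "real \<Rightarrow> nat \<Rightarrow> real" and \<sigma> :: "nat \<Rightarrow> real"
  assumes "finite D" "h > 0" "\<psi> > 0" "B \<ge> 0" "\<mu> \<ge> 0"
    and cont: "\<And>k. k \<in> D \<Longrightarrow> continuous_on {\<sigma> k - h..W} (\<lambda>t. u t k)"
    and deriv: "\<And>k t. k \<in> D \<Longrightarrow> \<sigma> k - h < t \<Longrightarrow> t < W \<Longrightarrow>
                  ((\<lambda>s. u s k) has_real_derivative u' t k) (at t)"
    and start: "\<And>k. k \<in> D \<Longrightarrow> u (\<sigma> k - h) k \<le> B"
    and drift: "\<And>k t. k \<in> D \<Longrightarrow> \<sigma> k - h < t \<Longrightarrow> t < W \<Longrightarrow>
                  (\<forall>j\<in>D. \<sigma> j \<le> t \<longrightarrow> u t j < - L) \<Longrightarrow> u' t k \<le> - \<psi> * u t k - \<mu>"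
    and fast: "L < \<mu>/\<psi> - (B + \<mu>/\<psi>) * exp (- \<psi> * h)"
  shows "\<forall>k\<in>D. \<forall>t. \<sigma> k \<le> t \<longrightarrow> t \<le> W \<longrightarrow> u t k < - L"
proof (rule ccontr)
  assume "\<not> ?thesis"
  then obtain k0 t0 where k0: "k0 \<in> D" "\<sigma> k0 \<le> t0" "t0 \<le> W" "0 \<le> u t0 k0 + L" by force
  have cont': "continuous_on {\<sigma> j..W} (\<lambda>t. u t j + L)" if "j \<in> D" for j
    using that \<open>h > 0\<close> by (intro continuous_intros continuous_on_subset[OF cont]) auto
  obtain k ts where k: "k \<in> D" "\<sigma> k \<le> ts" "ts \<le> W" "0 \<le> u ts k + L"
    and before: "\<And>j s. j \<in> D \<Longrightarrow> \<sigma> j \<le> s \<Longrightarrow> s < ts \<Longrightarrow> u s j + L < 0"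
    by (rule first_entrance_time[where f = "\<lambda>j t. u t j + L", OF \<open>finite D\<close> cont' k0]) auto
  have "u ts k \<le> - \<mu>/\<psi> + (B + \<mu>/\<psi>) * exp (- \<psi> * h)"
  proof (rule linear_decay_after_delay[where u = "\<lambda>s. u s k" and u' = "\<lambda>s. u' s k" and a = "\<sigma> k - h"])
    show "\<sigma> k - h + h \<le> ts" "0 \<le> h" using k(2) \<open>h > 0\<close> by auto
    show "continuous_on {\<sigma> k - h..ts} (\<lambda>s. u s k)"
      using k by (intro continuous_on_subset[OF cont[OF k(1)]]) auto
    fix s assume s: "\<sigma> k - h < s" "s < ts"
    show "((\<lambda>s. u s k) has_real_derivative u' s k) (at s)" using deriv[OF k(1) s(1)] s k by simp
    have "\<forall>j\<in>D. \<sigma> j \<le> s \<longrightarrow> u s j < - L" using before s(2) by force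
    then show "u' s k \<le> - \<psi> * u s k - \<mu>" using drift[OF k(1) s(1)] s k by simp
  qed (use assms(3-5) start[OF k(1)] in auto)
  then show False using k(4) fast by linarith
qed

section \<open>The logistic choice probability\<close>

lemma one_add_exp_gt_zero [simp]: "0 < 1 + exp (v::real)"
  by (simp add: add_pos_pos)

lemma one_add_exp_neq_zero [simp]: "1 + exp (v::real) \<noteq> 0"
  using one_add_exp_gt_zero[of v] by linarith

lemma pD_eq: "pD l v = 1 / (1 + exp (- (l * v)))"
  by (simp add: pD_def)

lemma pD_bounds: "0 < pD l v" "pD l v < 1" "0 \<le> pD l v" "pD l v \<le> 1"
  by (auto simp: pD_def)

lemma pD_le_half: "0 \<le> l \<Longrightarrow> v \<le> 0 \<Longrightarrow> pD l v \<le> 1/2"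
  by (simp add: pD_eq divide_le_eq  mult_nonneg_nonpos)

lemma pD_ge_half: "0 \<le> l \<Longrightarrow> 0 \<le> v \<Longrightarrow> 1/2 \<le> pD l v"
  by (simp add: pD_eq le_divide_eq)

lemma pD_le_exp: "pD l v \<le> exp (l * v)"
proof -
  have "exp (l * v) * (1 + exp (- (l * v))) = exp (l * v) + 1" by (simp add: distrib_left exp_minus)
  then show ?thesis by (simp add: pD_eq field_simps)
qed

lemma pD_le_exp_neg:
  assumes "0 \<le> a" "a \<le> l" "0 \<le> b" "v \<le> - b"
  shows "pD l v \<le> exp (- (a * b))"
proof -
  have "l * v \<le> l * (- b)" using assms by (intro mult_left_mono) auto
  also have "\<dots> \<le> a * (- b)" using assms by (intro mult_right_mono_neg) auto
  finally have "exp (l * v) \<le> exp (- (a * b))" by simp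
  then show ?thesis using pD_le_exp[of l v] by linarith
qed

lemma logistic_lipschitz:
  fixes u v :: real
  shows "\<bar>1 / (1 + exp (- u)) - 1 / (1 + exp (- v))\<bar> \<le> \<bar>u - v\<bar>"
proof -
  have deriv: "((\<lambda>u::real. 1 / (1 + exp (- u))) has_field_derivative exp (- u) / (1 + exp (- u))\<^sup>2)
          (at u within UNIV)" for u
    by (rule derivative_eq_intros refl | simp add: power2_eq_square)+
  have bound: "norm (exp (- u) / (1 + exp (- u))\<^sup>2) \<le> 1" for u :: real
  proof -
    have "exp (- u) \<le> (1 + exp (- u))\<^sup>2" by (simp add: power2_eq_square algebra_simps)
    then show ?thesis by (simp add: divide_le_eq)
  qed
  from field_differentiable_bound[OF convex_UNIV deriv bound, of u v] show ?thesis by simp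
qed

lemma pD_lipschitz: "0 \<le> l \<Longrightarrow> \<bar>pD l a - pD l b\<bar> \<le> l * \<bar>a - b\<bar>"
  using logistic_lipschitz[of "l * a" "l * b"] by (simp add: pD_eq abs_mult right_diff_distrib[symmetric])

lemma pD_dist_half: "\<bar>pD l v - 1/2\<bar> \<le> \<bar>l * v\<bar>"
  using logistic_lipschitz[of "l * v" 0] by (simp add: pD_eq)

lemma continuous_on_pD [continuous_intros]:
  "continuous_on S l \<Longrightarrow> continuous_on S u \<Longrightarrow> continuous_on S (\<lambda>t. pD (l t) (u t))"
  unfolding pD_eq by (intro continuous_intros) auto

lemma tendsto_pD_one:
  assumes "filterlim (\<lambda>t. l t * v t) at_top F"
  shows "((\<lambda>t. pD (l t) (v t)) \<longlongrightarrow> 1) F"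
proof -
  have "filterlim (\<lambda>t. - (l t * v t)) at_bot F"
    using assms by (simp add: filterlim_uminus_at_bot)
  then have "((\<lambda>t. exp (- (l t * v t))) \<longlongrightarrow> 0) F"
    by (rule filterlim_compose[OF exp_at_bot])
  then have "((\<lambda>t. 1 / (1 + exp (- (l t * v t)))) \<longlongrightarrow> 1 / (1 + 0)) F"
    by (intro tendsto_intros) auto
  then show ?thesis by (simp add: pD_eq)
qed

lemma tendsto_pD_zero:
  assumes "filterlim (\<lambda>t. l t * v t) at_bot F"
  shows "((\<lambda>t. pD (l t) (v t)) \<longlongrightarrow> 0) F"
proof (rule tendsto_sandwich[of "\<lambda>_. 0" _ F "\<lambda>t. exp (l t * v t)"])
  show "((\<lambda>t. exp (l t * v t)) \<longlongrightarrow> 0) F"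
    using filterlim_compose[OF exp_at_bot assms] .
qed (auto simp: pD_bounds pD_le_exp)

section \<open>The dynamics with \<open>\<eta> = 1\<close>\<close>

lemma nbrs_subset: "nbrs n G i \<subseteq> {..<n}"
  by (auto simp: nbrs_def)

lemma nbrs_lessD: "j \<in> nbrs n G i \<Longrightarrow> j < n"
  by (simp add: nbrs_def)

lemma finite_nbrs [simp]: "finite (nbrs n G i)"
  by (rule finite_subset[OF nbrs_subset]) simp

lemma deg_le: "deg n G i \<le> n"
  unfolding deg_def using card_mono[OF finite_lessThan nbrs_subset] by simp

lemma deg_ge_1_if_connected:
  assumes "connected_graph n G" "n \<ge> 2" "i < n"
  shows "1 \<le> deg n G i"
proof -
  define j where "j = (if i = 0 then 1 else (0::nat))"
  have "j < n" "j \<noteq> i" using assms by (auto simp: j_def)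
  then have "(\<lambda>a b. a < n \<and> b < n \<and> G a b)\<^sup>*\<^sup>* i j"
    using assms(1,3) unfolding connected_graph_def by blast
  then obtain k where "k < n" "G i k" using \<open>j \<noteq> i\<close> by (cases rule: converse_rtranclpE) auto
  then have "nbrs n G i \<noteq> {}" by (auto simp: nbrs_def)
  then show ?thesis unfolding deg_def by (simp add: Suc_le_eq card_gt_0_iff)
qed

definition ramp :: "real \<Rightarrow> real \<Rightarrow> real \<Rightarrow> real \<Rightarrow> real" where
  "ramp \<epsilon> A s t = \<epsilon> * (1 + t) + A * max 0 (t - s)"

lemma ramp_ge_slope: "A \<ge> 0 \<Longrightarrow> \<epsilon> * (1 + t) \<le> ramp \<epsilon> A s t"
  by (simp add: ramp_def)

lemma ramp_ge_boost: "\<epsilon> > 0 \<Longrightarrow> A \<ge> 0 \<Longrightarrow> t \<ge> 0 \<Longrightarrow> A * (t - s) \<le> ramp \<epsilon> A s t"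
  unfolding ramp_def by (smt (verit) mult_left_mono mult_nonneg_nonneg)

lemma ramp_pos: "\<epsilon> > 0 \<Longrightarrow> A \<ge> 0 \<Longrightarrow> t \<ge> 0 \<Longrightarrow> 0 < ramp \<epsilon> A s t"
  unfolding ramp_def by (smt (verit) mult_nonneg_nonneg mult_pos_pos)

lemma ramp_strict_mono: "\<epsilon> > 0 \<Longrightarrow> A \<ge> 0 \<Longrightarrow> strict_mono (ramp \<epsilon> A s)"
  unfolding ramp_def strict_mono_def
  by (smt (verit, best) max.mono mult_left_mono mult_strict_left_mono)

lemma continuous_on_ramp: "continuous_on S (ramp \<epsilon> A s)"
  unfolding ramp_def by (intro continuous_intros)

lemma filterlim_affine_at_top: "c > 0 \<Longrightarrow> filterlim (\<lambda>t::real. c * (1 + t)) at_top at_top"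
  by (rule filterlim_tendsto_pos_mult_at_top[OF tendsto_const _
        filterlim_tendsto_add_at_top[OF tendsto_const filterlim_ident]])

lemma filterlim_ramp_at_top: "\<epsilon> > 0 \<Longrightarrow> A \<ge> 0 \<Longrightarrow> filterlim (ramp \<epsilon> A s) at_top at_top"
  by (rule filterlim_at_top_mono[OF filterlim_affine_at_top always_eventually])
     (auto simp: ramp_ge_slope)

lemma behavioural_params_ramp:
  assumes "\<epsilon> > 0" "A \<ge> 0" "\<And>i. i < n \<Longrightarrow> psi i > 0"
  shows "behavioural_params n psi (\<lambda>_. 1) (\<lambda>i. ramp \<epsilon> A (s i))"
  unfolding behavioural_params_def
  using assms ramp_pos filterlim_ramp_at_top monotone_on_subset[OF ramp_strict_mono]
  by auto

locale coordination_game =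
  fixes n :: nat and G :: "nat \<Rightarrow> nat \<Rightarrow> bool" and x y z w :: real
  assumes two_agents: "n \<ge> 2" and connected: "connected_graph n G"
    and payoff_order: "z > w" "w > x" "x > y" and risk_dominance: "w + x > z + y"
begin

definition gain :: real where
  "gain = z - x + w - y"

text \<open>The drive an agent receives from a neighbour who plays \<open>D\<close> with probability \<open>1/2\<close>;
  it is positive because \<open>D\<close> is risk dominant.\<close>

definition mid_drive :: real where
  "mid_drive = (w + x - z - y) / 2"

lemma gain_pos: "gain > 0"
  using payoff_order by (simp add: gain_def)

lemma mid_drive_pos: "mid_drive > 0"
  using risk_dominance by (simp add: mid_drive_def)

lemma mid_drive_eq: "x - z + gain / 2 = mid_drive"
  by (simp add: gain_def mid_drive_def field_simps)

lemma deg_ge_1: "i < n \<Longrightarrow> 1 \<le> deg n G i"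
  using two_agents connected by (intro deg_ge_1_if_connected)

definition social_drive :: "(nat \<Rightarrow> real \<Rightarrow> real) \<Rightarrow> real \<Rightarrow> (nat \<Rightarrow> real) \<Rightarrow> nat \<Rightarrow> real" where
  "social_drive lam t v i = (\<Sum>j\<in>nbrs n G i. x - z + gain * pD (lam j t) (v j))"

lemma field_eta_one:
  "field n G x y z w psi (\<lambda>_. 1) lam t v i = - psi i * v i + social_drive lam t v i"
proof -
  define p where "p j = pD (lam j t) (v j)" for j
  have "(\<Sum>j\<in>nbrs n G i. p j * w + (1 - p j) * x) - (\<Sum>j\<in>nbrs n G i. p j * y + (1 - p j) * z)
        = (\<Sum>j\<in>nbrs n G i. x - z + gain * p j)"
    unfolding sum_subtractf[symmetric] by (rule sum.cong) (simp_all add: gain_def algebra_simps)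
  then show ?thesis unfolding field_def Let_def social_drive_def p_def[symmetric] by simp
qed

lemma abs_social_drive_le: "\<bar>social_drive lam t v i\<bar> \<le> real n * gain"
proof -
  have "\<bar>x - z + gain * pD (lam j t) (v j)\<bar> \<le> gain" for j
    using pD_bounds[of "lam j t" "v j"] gain_pos payoff_order
    by (simp add: abs_le_iff gain_def) (smt (verit) mult_left_le mult_nonneg_nonneg)
  then have "\<bar>social_drive lam t v i\<bar> \<le> real (deg n G i) * gain"
    unfolding social_drive_def deg_def by (intro order.trans[OF sum_abs] sum_bounded_above) auto
  also have "\<dots> \<le> real n * gain" using deg_le gain_pos by (intro mult_right_mono) auto
  finally show ?thesis .
qed

lemma social_drive_ge:
  assumes "i < n" "0 \<le> x - z + gain * p" "\<And>j. j \<in> nbrs n G i \<Longrightarrow> p \<le> pD (lam j t) (v j)"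
  shows "x - z + gain * p \<le> social_drive lam t v i"
proof -
  have "real (deg n G i) * (x - z + gain * p) \<le> social_drive lam t v i"
    unfolding social_drive_def deg_def
    using assms(3) gain_pos by (intro sum_bounded_below add_left_mono mult_left_mono) auto
  moreover have "x - z + gain * p \<le> real (deg n G i) * (x - z + gain * p)"
    using deg_ge_1[OF assms(1)] assms(2) by (simp add: mult_le_cancel_right1)
  ultimately show ?thesis by linarith
qed

lemma social_drive_le_split:
  assumes "\<And>j. j \<in> nbrs n G i \<Longrightarrow> j \<in> R \<Longrightarrow> pD (lam j t) (v j) \<le> p1"
    and "\<And>j. j \<in> nbrs n G i \<Longrightarrow> j \<notin> R \<Longrightarrow> pD (lam j t) (v j) \<le> p0"
  shows "social_drive lam t v i \<le> real (card (nbrs n G i \<inter> R)) * (x - z + gain * p1)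
           + (real (deg n G i) - real (card (nbrs n G i \<inter> R))) * (x - z + gain * p0)"
proof -
  let ?f = "\<lambda>j. x - z + gain * pD (lam j t) (v j)"
  have "social_drive lam t v i = sum ?f (nbrs n G i \<inter> R) + sum ?f (nbrs n G i - R)"
    unfolding social_drive_def by (rule sum.Int_Diff) simp
  also have "sum ?f (nbrs n G i \<inter> R) \<le> real (card (nbrs n G i \<inter> R)) * (x - z + gain * p1)"
    using assms(1) gain_pos by (intro sum_bounded_above add_left_mono mult_left_mono) auto
  also have "sum ?f (nbrs n G i - R) \<le> real (card (nbrs n G i - R)) * (x - z + gain * p0)"
    using assms(2) gain_pos by (intro sum_bounded_above add_left_mono mult_left_mono) auto
  also have "real (card (nbrs n G i - R)) = real (deg n G i) - real (card (nbrs n G i \<inter> R))"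
    using card_Int_Diff[of "nbrs n G i" R] by (simp add: deg_def)
  finally show ?thesis by simp
qed

corollary social_drive_le:
  assumes "\<And>j. j \<in> nbrs n G i \<Longrightarrow> pD (lam j t) (v j) \<le> p"
  shows "social_drive lam t v i \<le> real (deg n G i) * (x - z + gain * p)"
  using social_drive_le_split[of i "{}" lam t v p p] assms by simp

lemma social_drive_lipschitz:
  assumes "\<And>j. j < n \<Longrightarrow> 0 \<le> lam j t \<and> lam j t \<le> \<Lambda>" "0 \<le> \<Lambda>"
  shows "\<bar>social_drive lam t u i - social_drive lam t v i\<bar> \<le> gain * \<Lambda> * (\<Sum>j<n. \<bar>u j - v j\<bar>)"
proof -
  have "\<bar>social_drive lam t u i - social_drive lam t v i\<bar>
        = gain * \<bar>\<Sum>j\<in>nbrs n G i. pD (lam j t) (u j) - pD (lam j t) (v j)\<bar>"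
    using gain_pos unfolding social_drive_def sum_subtractf[symmetric]
    by (simp add: sum_distrib_left[symmetric] right_diff_distrib[symmetric] abs_mult)
  also have "\<dots> \<le> gain * (\<Sum>j\<in>nbrs n G i. \<Lambda> * \<bar>u j - v j\<bar>)"
    using gain_pos assms(1)
    by (intro mult_left_mono order.trans[OF sum_abs] sum_mono order.trans[OF pD_lipschitz]
        mult_right_mono) (auto dest: nbrs_lessD)
  also have "\<dots> \<le> gain * (\<Lambda> * (\<Sum>j<n. \<bar>u j - v j\<bar>))"
    using gain_pos assms(2) unfolding sum_distrib_left[symmetric]
    by (intro mult_left_mono sum_mono2 nbrs_subset) auto
  finally show ?thesis by (simp add: mult.assoc)
qed

lemma continuous_on_social_drive:
  assumes "\<And>j. j < n \<Longrightarrow> continuous_on S (lam j)" "\<And>j. j < n \<Longrightarrow> continuous_on S (\<lambda>t. v t j)"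
  shows "continuous_on S (\<lambda>t. social_drive lam t (v t) i)"
  unfolding social_drive_def using assms
  by (intro continuous_intros) (auto dest: nbrs_lessD)

end

context coordination_game
begin

lemma eta_one_field_lipschitz:
  assumes "\<And>j. j < n \<Longrightarrow> 0 \<le> lam j t \<and> lam j t \<le> \<Lambda>" "0 \<le> \<Lambda>" "i < n"
  shows "\<bar>(- psi i * u i + social_drive lam t u i) - (- psi i * v i + social_drive lam t v i)\<bar>
           \<le> ((\<Sum>i<n. \<bar>psi i\<bar>) + gain * \<Lambda>) * (\<Sum>j<n. \<bar>u j - v j\<bar>)"
proof -
  have "\<bar>psi i\<bar> * \<bar>u i - v i\<bar> \<le> (\<Sum>i<n. \<bar>psi i\<bar>) * (\<Sum>j<n. \<bar>u j - v j\<bar>)"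
    using \<open>i < n\<close> by (intro mult_mono member_le_sum[of i]) (auto intro: sum_nonneg)
  moreover have "\<bar>social_drive lam t u i - social_drive lam t v i\<bar> \<le> gain * \<Lambda> * (\<Sum>j<n. \<bar>u j - v j\<bar>)"
    using assms(1,2) by (rule social_drive_lipschitz)
  moreover have "\<bar>(- psi i * u i + social_drive lam t u i) - (- psi i * v i + social_drive lam t v i)\<bar>
                   \<le> \<bar>psi i\<bar> * \<bar>u i - v i\<bar> + \<bar>social_drive lam t u i - social_drive lam t v i\<bar>"
    by (simp add: abs_mult[symmetric] algebra_simps abs_triangle_ineq[THEN order_trans])
  ultimately show ?thesis by (simp add: algebra_simps)
qed

theorem eta_one_solution_exists:
  assumes lam_cont: "\<And>j. j < n \<Longrightarrow> continuous_on {0..} (lam j)"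
    and lam_nonneg: "\<And>j t. j < n \<Longrightarrow> 0 \<le> t \<Longrightarrow> 0 \<le> lam j t"
    and lam_mono: "\<And>j s t. j < n \<Longrightarrow> 0 \<le> s \<Longrightarrow> s \<le> t \<Longrightarrow> lam j s \<le> lam j t"
  shows "\<exists>q. is_solution n G x y z w psi (\<lambda>_. 1) lam q0 q"
proof -
  define F where "F t v i = - psi i * v i + social_drive lam t v i" for t v i
  interpret picard_problem n F q0
  proof
    fix u :: "real \<Rightarrow> nat \<Rightarrow> real" and i
    assume "i < n" "\<And>j. j < n \<Longrightarrow> continuous_on {0..} (\<lambda>t. u t j)"
    then show "continuous_on {0..} (\<lambda>t. F t (u t) i)"
      unfolding F_def by (intro continuous_intros continuous_on_social_drive lam_cont) auto
  next
    fix T :: real assume "T \<ge> 0"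
    define \<Lambda> where "\<Lambda> = (\<Sum>j<n. lam j T)"
    have "0 \<le> \<Lambda>" unfolding \<Lambda>_def using lam_nonneg \<open>T \<ge> 0\<close> by (intro sum_nonneg) auto
    have "0 \<le> lam j t \<and> lam j t \<le> \<Lambda>" if "t \<in> {0..T}" "j < n" for t j
    proof -
      have "lam j t \<le> lam j T" using lam_mono[OF that(2)] that(1) by simp
      also have "\<dots> \<le> \<Lambda>"
        unfolding \<Lambda>_def using that(2) lam_nonneg \<open>T \<ge> 0\<close> by (intro member_le_sum) auto
      finally show ?thesis using lam_nonneg[OF that(2)] that(1) by simp
    qed
    then have "\<forall>t\<in>{0..T}. \<forall>u v. \<forall>i<n. \<bar>F t u i - F t v i\<bar>
                 \<le> ((\<Sum>i<n. \<bar>psi i\<bar>) + gain * \<Lambda>) * (\<Sum>j<n. \<bar>u j - v j\<bar>)"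
      unfolding F_def using \<open>0 \<le> \<Lambda>\<close> by (blast intro: eta_one_field_lipschitz)
    moreover have "0 \<le> (\<Sum>i<n. \<bar>psi i\<bar>) + gain * \<Lambda>"
      using gain_pos \<open>0 \<le> \<Lambda>\<close> by (simp add: sum_nonneg)
    ultimately show "\<exists>L\<ge>0. \<forall>t\<in>{0..T}. \<forall>u v. \<forall>i<n. \<bar>F t u i - F t v i\<bar> \<le> L * (\<Sum>j<n. \<bar>u j - v j\<bar>)"
      by blast
  next
    have "\<bar>F t q0 i\<bar> \<le> (\<Sum>i<n. \<bar>psi i\<bar> * \<bar>q0 i\<bar>) + real n * gain" if "i < n" for t i
    proof -
      have "\<bar>F t q0 i\<bar> \<le> \<bar>psi i\<bar> * \<bar>q0 i\<bar> + \<bar>social_drive lam t q0 i\<bar>"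
        unfolding F_def by (simp add: abs_mult[symmetric] abs_triangle_ineq[THEN order_trans])
      moreover have "\<bar>psi i\<bar> * \<bar>q0 i\<bar> \<le> (\<Sum>i<n. \<bar>psi i\<bar> * \<bar>q0 i\<bar>)"
        using that by (intro member_le_sum) auto
      ultimately show ?thesis using abs_social_drive_le[of lam t q0 i] by linarith
    qed
    then show "\<exists>C. \<forall>t\<ge>0. \<forall>i<n. \<bar>F t q0 i\<bar> \<le> C" by blast
  qed
  from solution_exists show ?thesis
    unfolding is_solution_def field_eta_one F_def by blast
qed

end

locale eta_one_solution = coordination_game +
  fixes psi :: "nat \<Rightarrow> real" and lam :: "nat \<Rightarrow> real \<Rightarrow> real"
    and q0 :: "nat \<Rightarrow> real" and q :: "real \<Rightarrow> nat \<Rightarrow> real"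
  assumes solution: "is_solution n G x y z w psi (\<lambda>_. 1) lam q0 q"
    and psi_pos: "\<And>i. i < n \<Longrightarrow> psi i > 0"
    and lam_nonneg: "\<And>i t. i < n \<Longrightarrow> 0 \<le> t \<Longrightarrow> 0 \<le> lam i t"
begin

abbreviation drift :: "real \<Rightarrow> nat \<Rightarrow> real" where
  "drift t i \<equiv> - psi i * q t i + social_drive lam t (q t) i"

lemma initial: "i < n \<Longrightarrow> q 0 i = q0 i"
  using solution unfolding is_solution_def by blast

lemma has_derivative_within_agent:
  "i < n \<Longrightarrow> 0 \<le> t \<Longrightarrow> ((\<lambda>s. q s i) has_real_derivative drift t i) (at t within {0..})"
  using solution unfolding is_solution_def field_eta_one by blast

lemma continuous_on_agent: "i < n \<Longrightarrow> continuous_on {0..} (\<lambda>t. q t i)"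
  unfolding continuous_on_eq_continuous_within
  using has_derivative_within_agent DERIV_continuous by blast

lemma has_derivative_agent:
  assumes "i < n" "0 < t"
  shows "((\<lambda>s. q s i) has_real_derivative drift t i) (at t)"
proof -
  have "at t within {0..} = at t" using assms(2) by (intro at_within_interior) auto
  then show ?thesis using has_derivative_within_agent[OF assms(1), of t] assms(2) by simp
qed

lemma continuous_on_agent_interval: "i < n \<Longrightarrow> 0 \<le> a \<Longrightarrow> continuous_on {a..b} (\<lambda>t. q t i)"
  by (rule continuous_on_subset[OF continuous_on_agent]) auto

lemma agent_upper_estimate:
  assumes "i < n" "0 \<le> t" "\<And>s. 0 < s \<Longrightarrow> s < t \<Longrightarrow> social_drive lam s (q s) i \<le> m"
  shows "q t i \<le> m / psi i + (q0 i - m / psi i) * exp (- psi i * t)"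
  using linear_differential_inequality_upper[OF assms(2) psi_pos[OF assms(1)]
      has_derivative_agent[OF assms(1)] continuous_on_agent_interval[OF assms(1)], of m] assms
  by (simp add: initial)

lemma agent_lower_estimate:
  assumes "i < n" "0 \<le> t" "\<And>s. 0 < s \<Longrightarrow> s < t \<Longrightarrow> m \<le> social_drive lam s (q s) i"
  shows "m / psi i + (q0 i - m / psi i) * exp (- psi i * t) \<le> q t i"
  using linear_differential_inequality_lower[OF assms(2) psi_pos[OF assms(1)]
      has_derivative_agent[OF assms(1)] continuous_on_agent_interval[OF assms(1)], of m] assms
  by (simp add: initial)

lemma agent_bound:
  assumes "i < n" "0 \<le> t"
  shows "\<bar>q t i\<bar> \<le> \<bar>q0 i\<bar> + real n * gain / psi i"
proof -
  define M where "M = real n * gain / psi i"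
  define e where "e = exp (- psi i * t)"
  have "0 \<le> M" using gain_pos psi_pos[OF assms(1)] by (simp add: M_def)
  have "0 < e" "e \<le> 1" using psi_pos[OF assms(1)] assms(2) by (auto simp: e_def)
  have up: "social_drive lam s (q s) i \<le> real n * gain"
    and lo: "- (real n * gain) \<le> social_drive lam s (q s) i" for s
    using abs_social_drive_le[of lam s "q s" i] by linarith+
  have "q t i \<le> M + (q0 i - M) * e"
    unfolding M_def e_def by (rule agent_upper_estimate[OF assms up])
  have "- (real n * gain) / psi i + (q0 i - - (real n * gain) / psi i) * e \<le> q t i"
    unfolding e_def by (rule agent_lower_estimate[OF assms lo])
  then have "- M + (q0 i + M) * e \<le> q t i" by (simp add: M_def)
  moreover have "\<bar>q0 i\<bar> * e \<le> \<bar>q0 i\<bar>" using \<open>e \<le> 1\<close> by (simp add: mult_left_le)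
  moreover have "(q0 i - M) * e \<le> \<bar>q0 i\<bar> * e" "(- \<bar>q0 i\<bar>) * e \<le> (q0 i + M) * e"
    using \<open>0 < e\<close> \<open>0 \<le> M\<close> by (intro mult_right_mono; simp)+
  ultimately show ?thesis using \<open>q t i \<le> M + (q0 i - M) * e\<close> unfolding M_def by linarith
qed

lemma early_push:
  assumes "i < n" "0 \<le> W"
    and near_half: "\<And>j t. j < n \<Longrightarrow> 0 \<le> t \<Longrightarrow> t \<le> W \<Longrightarrow>
                      1/2 - mid_drive / (2 * gain) \<le> pD (lam j t) (q t j)"
  shows "mid_drive / 2 / psi i + (q0 i - mid_drive / 2 / psi i) * exp (- psi i * W) \<le> q W i"
proof (rule agent_lower_estimate[OF assms(1,2)])
  fix t assume "0 < t" "t < W"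
  have "gain * (mid_drive / (2 * gain)) = mid_drive / 2" using gain_pos by simp
  then have "x - z + gain * (1/2 - mid_drive / (2 * gain)) = mid_drive / 2"
    using mid_drive_eq unfolding right_diff_distrib by linarith
  moreover have "x - z + gain * (1/2 - mid_drive / (2 * gain)) \<le> social_drive lam t (q t) i"
    using \<open>0 < t\<close> \<open>t < W\<close> mid_drive_pos calculation
    by (intro social_drive_ge[OF assms(1)] near_half) (auto dest: nbrs_lessD)
  ultimately show "mid_drive / 2 \<le> social_drive lam t (q t) i" by linarith
qed

lemma positive_invariant:
  assumes "0 \<le> W" "0 < c" "\<And>i. i < n \<Longrightarrow> 2 * c < q W i"
    and "\<And>i. i < n \<Longrightarrow> psi i * (2 * c) < mid_drive"
  shows "\<forall>t\<ge>W. \<forall>i<n. c \<le> q t i"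
proof (rule lower_barrier_invariant[where u' = drift and c' = "\<lambda>_. 2 * c"])
  fix i assume "i < n"
  show "continuous_on {W..} (\<lambda>t. q t i)"
    using continuous_on_agent[OF \<open>i < n\<close>] by (rule continuous_on_subset) (use assms(1) in auto)
  show "c < 2 * c" using assms(2) by simp
  fix t assume "W < t"
  then show "((\<lambda>s. q s i) has_real_derivative drift t i) (at t)"
    using has_derivative_agent[OF \<open>i < n\<close>] assms(1) by simp
next
  fix t i assume t: "W < t" and above: "\<forall>j<n. c \<le> q t j" and "i < n" and "q t i \<le> 2 * c"
  have "1/2 \<le> pD (lam j t) (q t j)" if "j \<in> nbrs n G i" for j
    using nbrs_lessD[OF that] above assms(1,2) t by (intro pD_ge_half lam_nonneg) force+
  then have "x - z + gain * (1/2) \<le> social_drive lam t (q t) i"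
    using mid_drive_eq mid_drive_pos by (intro social_drive_ge[OF \<open>i < n\<close>]) auto
  then have "mid_drive \<le> social_drive lam t (q t) i" using mid_drive_eq by linarith
  moreover have "psi i * q t i \<le> psi i * (2 * c)"
    using psi_pos[OF \<open>i < n\<close>] \<open>q t i \<le> 2 * c\<close> by (intro mult_left_mono) auto
  ultimately show "0 < drift t i" using assms(4)[OF \<open>i < n\<close>] by linarith
qed (use assms(3) in auto)

lemma negative_invariant:
  assumes "0 \<le> W" "0 < c" "\<And>i. i < n \<Longrightarrow> q W i < - (2 * c)"
    and "\<And>i. i < n \<Longrightarrow> psi i * (2 * c) \<le> (z - x) / 4" and "gain * \<delta> \<le> (z - x) / 2"
    and small: "\<And>t j. W < t \<Longrightarrow> j < n \<Longrightarrow> q t j \<le> - c \<Longrightarrow> pD (lam j t) (q t j) \<le> \<delta>"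
  shows "\<forall>t\<ge>W. \<forall>i<n. q t i \<le> - c"
proof -
  have "\<forall>t\<ge>W. \<forall>i<n. c \<le> - q t i"
  proof (rule lower_barrier_invariant[where u = "\<lambda>t i. - q t i" and u' = "\<lambda>t i. - drift t i"
        and c' = "\<lambda>_. 2 * c"])
    fix i assume "i < n"
    show "continuous_on {W..} (\<lambda>t. - q t i)"
      using continuous_on_agent[OF \<open>i < n\<close>] assms(1)
      by (intro continuous_on_minus) (auto intro: continuous_on_subset)
    show "c < 2 * c" "2 * c < - q W i" using assms(2) assms(3)[OF \<open>i < n\<close>] by auto
    fix t assume "W < t"
    then show "((\<lambda>s. - q s i) has_real_derivative - drift t i) (at t)"
      using has_derivative_agent[OF \<open>i < n\<close>] assms(1) by (intro DERIV_minus) simp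
  next
    fix t i assume t: "W < t" and below: "\<forall>j<n. c \<le> - q t j" and "i < n" and "- q t i \<le> 2 * c"
    have "social_drive lam t (q t) i \<le> real (deg n G i) * (x - z + gain * \<delta>)"
      using below t by (intro social_drive_le small) (auto dest: nbrs_lessD)
    also have "\<dots> \<le> real (deg n G i) * (- ((z - x) / 2))"
      using assms(5) by (intro mult_left_mono) (auto simp: field_simps)
    also have "\<dots> \<le> 1 * (- ((z - x) / 2))"
      using deg_ge_1[OF \<open>i < n\<close>] payoff_order by (intro mult_right_mono_neg) auto
    finally have "social_drive lam t (q t) i \<le> - ((z - x) / 2)" by simp
    moreover have "psi i * (- q t i) \<le> psi i * (2 * c)"
      using psi_pos[OF \<open>i < n\<close>] \<open>- q t i \<le> 2 * c\<close> by (intro mult_left_mono) auto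
    moreover have "(z - x) / 2 = z/2 - x/2" "(z - x) / 4 = z/4 - x/4" "psi i * - q t i = - psi i * q t i"
      by simp_all
    ultimately show "0 < - drift t i" using assms(4)[OF \<open>i < n\<close>] payoff_order by linarith
  qed
  then show ?thesis by force
qed

lemma agent_stays_negative:
  assumes "i < n" "q0 i < 0" "0 \<le> t" "psi i * t \<le> 1/2" "real n * gain / psi i \<le> - q0 i / 4"
  shows "q t i \<le> q0 i / 4"
proof -
  define M where "M = real n * gain / psi i"
  have "0 \<le> M" using gain_pos psi_pos[OF assms(1)] by (simp add: M_def)
  have "q t i \<le> M + (q0 i - M) * exp (- psi i * t)"
    unfolding M_def using abs_social_drive_le
    by (intro agent_upper_estimate[OF assms(1,3)]) (simp add: abs_le_iff)
  moreover have "1/2 \<le> exp (- psi i * t)"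
    using exp_ge_add_one_self[of "- psi i * t"] assms(4) by simp
  then have "(q0 i - M) * exp (- psi i * t) \<le> (q0 i - M) * (1/2)"
    using assms(2) \<open>0 \<le> M\<close> by (intro mult_left_mono_neg) auto
  moreover have "(q0 i - M) * (1/2) = q0 i / 2 - M / 2" by simp
  ultimately show ?thesis using assms(2,5) M_def by linarith
qed

text \<open>While the sensitivities are small every neighbour plays \<open>D\<close> with probability close to \<open>1/2\<close>,
  which drives every agent up since \<open>D\<close> is risk dominant.\<close>

lemma positive_after_slow_start:
  assumes "\<And>i. i < n \<Longrightarrow> psi i = 1" "\<And>j t. lam j t = \<epsilon> * (1 + t)" "0 < \<epsilon>"
    and bound: "\<And>j t. j < n \<Longrightarrow> 0 \<le> t \<Longrightarrow> \<bar>q t j\<bar> \<le> B"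
    and "0 < W" "4 * (B + mid_drive / 2) \<le> W * mid_drive"
    and slow: "\<epsilon> * (1 + W) * (B + 1) \<le> mid_drive / (2 * gain)"
  shows "\<forall>t\<ge>W. \<forall>i<n. mid_drive / 16 \<le> q t i"
proof (rule positive_invariant)
  have "1/2 - mid_drive / (2 * gain) \<le> pD (lam j t) (q t j)" if "j < n" "0 \<le> t" "t \<le> W" for j t
  proof -
    have "\<bar>pD (lam j t) (q t j) - 1/2\<bar> \<le> \<epsilon> * (1 + t) * \<bar>q t j\<bar>"
      using pD_dist_half[of "lam j t" "q t j"] assms(2,3) that by (simp add: abs_mult)
    also have "\<dots> \<le> \<epsilon> * (1 + W) * (B + 1)"
      using bound[OF that(1,2)] assms(3) that by (intro mult_mono) auto
    finally show ?thesis using slow by linarith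
  qed
  then have pushed: "mid_drive / 2 + (q0 i - mid_drive / 2) * exp (- W) \<le> q W i" if "i < n" for i
    using early_push[OF that, of W] assms(1)[OF that] \<open>0 < W\<close> by simp
  have "0 \<le> B" using bound[of 0 0] two_agents by fastforce
  fix i assume "i < n"
  have "(B + mid_drive / 2) * exp (- W) \<le> (B + mid_drive / 2) * (1 / W)"
  proof (intro mult_left_mono)
    have "W \<le> exp W" using exp_ge_add_one_self[of W] by linarith
    then show "exp (- W) \<le> 1 / W" using \<open>0 < W\<close> by (simp add: exp_minus field_simps)
  qed (use \<open>0 \<le> B\<close> mid_drive_pos in simp)
  also have "\<dots> \<le> mid_drive / 4" using assms(6) \<open>0 < W\<close> by (simp add: field_simps)
  finally have "(B + mid_drive / 2) * exp (- W) \<le> mid_drive / 4" .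
  moreover have "- (B + mid_drive / 2) * exp (- W) \<le> (q0 i - mid_drive / 2) * exp (- W)"
    using bound[OF \<open>i < n\<close>, of 0] by (intro mult_right_mono) (auto simp: initial[OF \<open>i < n\<close>])
  ultimately show "2 * (mid_drive / 16) < q W i" using pushed[OF \<open>i < n\<close>] mid_drive_pos by linarith
next
  show "\<And>i. i < n \<Longrightarrow> psi i * (2 * (mid_drive / 16)) < mid_drive"
    using assms(1) mid_drive_pos by simp
qed (use \<open>0 < W\<close> mid_drive_pos in auto)

end

section \<open>Convergence to the risk-dominant action\<close>

context coordination_game
begin

lemma ramp_solution_exists:
  assumes "\<epsilon> > 0" "A \<ge> 0"
  shows "\<exists>q. is_solution n G x y z w psi (\<lambda>_. 1) (\<lambda>i. ramp \<epsilon> A (s i)) q0 q"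
  using assms ramp_pos monotoneD[OF ramp_strict_mono]
  by (intro eta_one_solution_exists continuous_on_ramp)
     (auto simp: less_imp_le order.order_iff_strict)

theorem converges_to_D:
  "\<exists>psi eta lam. behavioural_params n psi eta lam \<and> actions_converge n G x y z w psi eta lam q0 1"
proof -
  define B where "B = (\<Sum>i<n. \<bar>q0 i\<bar>) + real n * gain"
  define W where "W = 4 * (B + mid_drive / 2) / mid_drive"
  define \<epsilon> where "\<epsilon> = mid_drive / (2 * gain) / ((1 + W) * (B + 1))"
  define lam where "lam = (\<lambda>i::nat. ramp \<epsilon> 0 0)"
  have "0 \<le> B" using gain_pos by (simp add: B_def sum_nonneg)
  then have "0 < W" using mid_drive_pos by (simp add: W_def)
  then have "0 < \<epsilon>" using \<open>0 \<le> B\<close> mid_drive_pos gain_pos by (simp add: \<epsilon>_def)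
  have lam_eq: "lam i t = \<epsilon> * (1 + t)" for i t by (simp add: lam_def ramp_def)
  have "\<forall>i<n. ((\<lambda>t. pD (lam i t) (q t i)) \<longlongrightarrow> 1) at_top"
    if "is_solution n G x y z w (\<lambda>_. 1) (\<lambda>_. 1) lam q0 q" for q
  proof -
    interpret eta_one_solution n G x y z w "\<lambda>_. 1" lam q0 q
      using that \<open>0 < \<epsilon>\<close> by unfold_locales (auto simp: lam_def less_imp_le ramp_pos)
    have bound: "\<bar>q t j\<bar> \<le> B" if "j < n" "0 \<le> t" for j t
      using agent_bound[OF that] member_le_sum[of j "{..<n}" "\<lambda>i. \<bar>q0 i\<bar>"] that(1)
      by (simp add: B_def)
    have "4 * (B + mid_drive / 2) = W * mid_drive" using mid_drive_pos by (simp add: W_def)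
    moreover have "\<epsilon> * (1 + W) * (B + 1) = mid_drive / (2 * gain)"
      using \<open>0 < W\<close> \<open>0 \<le> B\<close> by (simp add: \<epsilon>_def)
    ultimately have above: "\<forall>t\<ge>W. \<forall>i<n. mid_drive / 16 \<le> q t i"
      by (intro positive_after_slow_start[OF _ lam_eq \<open>0 < \<epsilon>\<close> bound \<open>0 < W\<close>]) simp_all
    show ?thesis
    proof (intro allI impI tendsto_pD_one filterlim_at_top_mono[OF filterlim_affine_at_top])
      fix i assume "i < n"
      show "\<epsilon> * (mid_drive / 16) > 0" using \<open>0 < \<epsilon>\<close> mid_drive_pos by simp
      show "\<forall>\<^sub>F t in at_top. \<epsilon> * (mid_drive / 16) * (1 + t) \<le> lam i t * q t i"
        using above \<open>i < n\<close> \<open>0 < W\<close> \<open>0 < \<epsilon>\<close> unfolding eventually_at_top_linorder lam_eq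
        by (intro exI[of _ W]) (auto simp: mult_ac intro!: mult_left_mono)
    qed
  qed
  moreover have "behavioural_params n (\<lambda>_. 1) (\<lambda>_. 1) lam"
    unfolding lam_def using \<open>0 < \<epsilon>\<close> by (intro behavioural_params_ramp) auto
  moreover have "\<exists>q. is_solution n G x y z w (\<lambda>_. 1) (\<lambda>_. 1) lam q0 q"
    unfolding lam_def using \<open>0 < \<epsilon>\<close> by (intro ramp_solution_exists) auto
  ultimately show ?thesis unfolding actions_converge_def by blast
qed

end

section \<open>Convergence to the efficient action\<close>

lemma exists_peeling_rank:
  assumes "finite D" and P: "\<And>S. S \<subseteq> D \<Longrightarrow> S \<noteq> {} \<Longrightarrow> \<exists>i\<in>S. P S i"
  shows "\<exists>r::nat \<Rightarrow> nat. \<forall>i\<in>D. r i < card D \<and> P {j\<in>D. r i \<le> r j} i"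
proof -
  have "\<exists>r::nat \<Rightarrow> nat. \<forall>i\<in>S. r i < card S \<and> P {j\<in>S. r i \<le> r j} i" if "S \<subseteq> D" for S
    using finite_subset[OF that assms(1)] that
  proof (induction S rule: finite_psubset_induct)
    case (psubset S)
    show ?case
    proof (cases "S = {}")
      case False
      then obtain i0 where i0: "i0 \<in> S" "P S i0" using P psubset.prems by blast
      define S' where "S' = S - {i0}"
      have "S' \<subset> S" using i0(1) by (auto simp: S'_def)
      then obtain r' where r': "\<forall>i\<in>S'. r' i < card S' \<and> P {j\<in>S'. r' i \<le> r' j} i"
        using psubset.IH psubset.prems by blast
      define r where "r i = (if i = i0 then 0 else Suc (r' i))" for i
      have card_S: "card S = Suc (card S')"
        unfolding S'_def using card_Suc_Diff1[OF psubset.hyps i0(1)] by simp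
      have "r i < card S \<and> P {j\<in>S. r i \<le> r j} i" if "i \<in> S" for i
      proof (cases "i = i0")
        case True
        moreover have "{j\<in>S. r i0 \<le> r j} = S" by (auto simp: r_def)
        ultimately show ?thesis using i0 card_S by (simp add: r_def)
      next
        case False
        then have "i \<in> S'" "{j\<in>S. r i \<le> r j} = {j\<in>S'. r' i \<le> r' j}"
          using that by (auto simp: r_def S'_def)
        then show ?thesis using r' False card_S by (simp add: r_def)
      qed
      then show ?thesis by blast
    qed simp
  qed
  then show ?thesis by blast
qed

locale efficient_start = coordination_game +
  fixes q0 :: "nat \<Rightarrow> real"
  assumes q0_nonzero: "\<forall>i<n. q0 i \<noteq> 0"
    and not_cohesive: "\<not> (\<exists>S. S \<noteq> {} \<and> S \<subseteq> {i. i < n \<and> q0 i > 0} \<and>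
                             cohesiveness n G S \<ge> 2 * (z - x) / (z - x + w - y))"
begin

definition defectors :: "nat set" where
  "defectors = {i. i < n \<and> q0 i > 0}"

definition cooperators :: "nat set" where
  "cooperators = {i. i < n \<and> q0 i < 0}"

lemma finite_defectors [simp]: "finite defectors"
  by (simp add: defectors_def)

lemma defectors_lessD: "i \<in> defectors \<Longrightarrow> i < n"
  by (simp add: defectors_def)

lemma cooperators_iff: "i \<in> cooperators \<longleftrightarrow> i < n \<and> i \<notin> defectors"
  using q0_nonzero by (auto simp: cooperators_def defectors_def)

definition rank :: "nat \<Rightarrow> nat" where
  "rank = (SOME r. \<forall>i\<in>defectors. r i < card defectors \<and>
     real (card (nbrs n G i \<inter> {j\<in>defectors. r i \<le> r j})) * gain < 2 * (z - x) * real (deg n G i))"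

abbreviation later :: "nat \<Rightarrow> nat set" where
  "later i \<equiv> {j\<in>defectors. rank i \<le> rank j}"

abbreviation later_nbrs :: "nat \<Rightarrow> real" where
  "later_nbrs i \<equiv> real (card (nbrs n G i \<inter> later i))"

text \<open>The absence of a cohesive subset lets the initial defectors be converted one after another,
  each of them having few neighbours among those not yet converted.\<close>

lemma rank:
  assumes "i \<in> defectors"
  shows "rank i < card defectors" "later_nbrs i * gain < 2 * (z - x) * real (deg n G i)"
proof -
  have "\<exists>r::nat \<Rightarrow> nat. \<forall>i\<in>defectors. r i < card defectors \<and>
     real (card (nbrs n G i \<inter> {j\<in>defectors. r i \<le> r j})) * gain < 2 * (z - x) * real (deg n G i)"
  proof (rule exists_peeling_rank[OF finite_defectors, where
        P = "\<lambda>S i. real (card (nbrs n G i \<inter> S)) * gain < 2 * (z - x) * real (deg n G i)"])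
    fix S assume S: "S \<subseteq> defectors" "S \<noteq> {}"
    then have "\<not> 2 * (z - x) / gain \<le> cohesiveness n G S"
      using not_cohesive unfolding defectors_def gain_def by blast
    then have "Min ((\<lambda>i. real (card (nbrs n G i \<inter> S)) / real (deg n G i)) ` S) < 2 * (z - x) / gain"
      unfolding cohesiveness_def by linarith
    then obtain i where i: "i \<in> S"
      "real (card (nbrs n G i \<inter> S)) / real (deg n G i) < 2 * (z - x) / gain"
      using finite_subset[OF S(1) finite_defectors] S(2) by (subst (asm) Min_less_iff) auto
    define d where "d = real (deg n G i)"
    have "0 < d" using deg_ge_1 i(1) S(1) defectors_lessD unfolding d_def by force
    then have "real (card (nbrs n G i \<inter> S)) / d * (d * gain) < 2 * (z - x) / gain * (d * gain)"
      using i(2) gain_pos by (intro mult_strict_right_mono) (auto simp: d_def)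
    moreover have "real (card (nbrs n G i \<inter> S)) / d * (d * gain) = real (card (nbrs n G i \<inter> S)) * gain"
      "2 * (z - x) / gain * (d * gain) = 2 * (z - x) * d"
      using \<open>0 < d\<close> gain_pos by simp_all
    ultimately show "\<exists>i\<in>S. real (card (nbrs n G i \<inter> S)) * gain < 2 * (z - x) * real (deg n G i)"
      using i(1) unfolding d_def by auto
  qed
  then have "\<forall>i\<in>defectors. rank i < card defectors \<and>
     later_nbrs i * gain < 2 * (z - x) * real (deg n G i)"
    unfolding rank_def by (rule someI_ex)
  then show "rank i < card defectors" "later_nbrs i * gain < 2 * (z - x) * real (deg n G i)"
    using assms by auto
qed

definition margin :: real where
  "margin = Min (insert (z - x)
     ((\<lambda>i. z - x - later_nbrs i * gain / (2 * real (deg n G i))) ` defectors))"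

lemma margin:
  shows "0 < margin" "margin \<le> z - x"
    and "\<And>i. i \<in> defectors \<Longrightarrow> margin \<le> z - x - later_nbrs i * gain / (2 * real (deg n G i))"
proof -
  have "0 < z - x - later_nbrs i * gain / (2 * real (deg n G i))" if "i \<in> defectors" for i
    using rank(2)[OF that] deg_ge_1[OF defectors_lessD[OF that]] by (simp add: field_simps)
  then show "0 < margin" using payoff_order by (auto simp: margin_def)
qed (auto simp: margin_def)

definition low_prob :: real where
  "low_prob = margin / (2 * gain)"

lemma low_prob: "0 < low_prob" "low_prob < 1" "gain * low_prob = margin / 2"
  using margin(1,2) gain_pos payoff_order by (auto simp: low_prob_def gain_def field_simps)

lemma converted_drive_bound:
  assumes "k \<in> defectors"
  shows "later_nbrs k * (mid_drive + gain * low_prob)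
           + (real (deg n G k) - later_nbrs k) * (x - z + gain * low_prob) \<le> - (margin / 2)"
proof -
  define d where "d = real (deg n G k)"
  have "1 \<le> d" using deg_ge_1[OF defectors_lessD[OF assms]] by (simp add: d_def)
  have "d * margin \<le> d * (z - x) - later_nbrs k * gain / 2"
    using mult_left_mono[OF margin(3)[OF assms], of d] \<open>1 \<le> d\<close> by (simp add: d_def right_diff_distrib)
  moreover have "later_nbrs k * (mid_drive + gain * low_prob) + (d - later_nbrs k) * (x - z + gain * low_prob)
      = later_nbrs k * gain / 2 - d * (z - x) + d * (margin / 2)"
    unfolding mid_drive_eq[symmetric] low_prob(3) by (simp add: algebra_simps)
  moreover have "margin / 2 \<le> d * (margin / 2)" using \<open>1 \<le> d\<close> margin(1) by simp
  ultimately show ?thesis unfolding d_def by linarith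
qed

definition horizon :: real where
  "horizon = Min (insert 1 ((\<lambda>i. - q0 i / (8 * real n * gain)) ` cooperators))"

lemma horizon:
  shows "0 < horizon" "horizon \<le> 1"
    and "\<And>i. i \<in> cooperators \<Longrightarrow> horizon \<le> - q0 i / (8 * real n * gain)"
proof -
  have "0 < - q0 i / (8 * real n * gain)" if "i \<in> cooperators" for i
    using that two_agents gain_pos by (simp add: cooperators_def divide_neg_pos)
  then show "0 < horizon" by (auto simp: horizon_def cooperators_def)
  show "horizon \<le> 1" unfolding horizon_def by (rule Min_le) (auto simp: cooperators_def)
  fix i assume "i \<in> cooperators"
  then show "horizon \<le> - q0 i / (8 * real n * gain)"
    unfolding horizon_def by (intro Min_le) (auto simp: cooperators_def)
qed

definition slot :: real where
  "slot = horizon / (real n + 1)"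

text \<open>From its release time on, an agent's sensitivity has a steep component (see \<open>lam\<close> below).
  Defectors are released in rank order, one per slot; cooperators before time \<open>0\<close>.\<close>

definition release :: "nat \<Rightarrow> real" where
  "release i = (if i \<in> defectors then (real (rank i) + 1) * slot else - (slot / 2))"

lemma slot_pos: "0 < slot"
  using horizon(1) by (simp add: slot_def)

lemma release_defector:
  assumes "i \<in> defectors"
  shows "slot \<le> release i" "release i + slot \<le> horizon"
proof -
  have "card defectors \<le> n" using card_mono[of "{..<n}" defectors] by (auto simp: defectors_def)
  then have "real (rank i) + 2 \<le> real n + 1" using rank(1)[OF assms] by linarith
  then have "(real (rank i) + 2) * slot \<le> (real n + 1) * slot"
    using slot_pos by (intro mult_right_mono) auto
  moreover have "(real n + 1) * slot = horizon" by (simp add: slot_def)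
  ultimately show "release i + slot \<le> horizon"
    using assms by (simp add: release_def algebra_simps)
  show "slot \<le> release i" using assms slot_pos by (simp add: release_def)
qed

lemma release_earlier:
  assumes "j \<in> defectors" "k \<in> defectors" "rank j < rank k"
  shows "release j + slot \<le> release k"
proof -
  have "real (rank j) + 1 \<le> real (rank k)" using assms(3) by linarith
  then have "slot * (real (rank j) + 1) \<le> slot * real (rank k)"
    using slot_pos by (intro mult_left_mono) auto
  then show ?thesis using assms by (simp add: release_def algebra_simps)
qed

definition q_bound :: real where
  "q_bound = (\<Sum>i<n. \<bar>q0 i\<bar>) + 2 * real n * gain"

definition psi_C :: real where
  "psi_C = 1 / (2 * horizon)"

definition psi_D :: real where
  "psi_D = max 1 (8 * (q_bound + margin / 2) / (margin / 2 * (slot / 2)\<^sup>2))"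

definition psi :: "nat \<Rightarrow> real" where
  "psi i = (if i \<in> defectors then psi_D else psi_C)"

lemma q_bound_nonneg: "0 \<le> q_bound"
  using gain_pos by (simp add: q_bound_def sum_nonneg)

lemma psi_ge_half: "1/2 \<le> psi i"
  using horizon(1,2) by (auto simp: psi_def psi_D_def psi_C_def field_simps)

definition entry_level :: real where
  "entry_level = margin / (8 * psi_D)"

definition trap_level :: real where
  "trap_level = Min (insert entry_level (insert ((z - x) / (8 * max psi_D psi_C))
                      ((\<lambda>i. - q0 i / 4) ` cooperators))) / 4"

lemma entry_level_pos: "0 < entry_level"
  using margin(1) by (simp add: entry_level_def psi_D_def)

lemma trap_level:
  shows "0 < trap_level" "2 * trap_level < entry_level"
    and "\<And>i. i \<in> cooperators \<Longrightarrow> 2 * trap_level < - q0 i / 4"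
    and "\<And>i. psi i * (2 * trap_level) \<le> (z - x) / 4"
proof -
  let ?M = "Min (insert entry_level (insert ((z - x) / (8 * max psi_D psi_C))
                      ((\<lambda>i. - q0 i / 4) ` cooperators)))"
  have fin: "finite (insert entry_level (insert ((z - x) / (8 * max psi_D psi_C))
                      ((\<lambda>i. - q0 i / 4) ` cooperators)))"
    by (simp add: cooperators_def)
  have "0 < psi_C" using horizon(1) by (simp add: psi_C_def)
  then have "0 < max psi_D psi_C" by (simp add: less_max_iff_disj)
  then have "0 < ?M" using fin entry_level_pos payoff_order by (auto simp: cooperators_def)
  moreover have "?M \<le> entry_level" "\<And>i. i \<in> cooperators \<Longrightarrow> ?M \<le> - q0 i / 4"
    by (rule Min_le[OF fin], simp)+
  ultimately show "0 < trap_level" "2 * trap_level < entry_level"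
    "\<And>i. i \<in> cooperators \<Longrightarrow> 2 * trap_level < - q0 i / 4"
    unfolding trap_level_def by (fastforce+)
  fix i
  have "psi i * (2 * trap_level) \<le> max psi_D psi_C * (?M / 2)"
    using \<open>0 < ?M\<close> \<open>0 < max psi_D psi_C\<close> by (intro mult_mono) (auto simp: psi_def trap_level_def)
  also have "\<dots> \<le> max psi_D psi_C * ((z - x) / (8 * max psi_D psi_C) / 2)"
    using fin \<open>0 < max psi_D psi_C\<close> by (intro mult_left_mono divide_right_mono Min_le) auto
  also have "\<dots> \<le> (z - x) / 4" using \<open>0 < max psi_D psi_C\<close> payoff_order by simp
  finally show "psi i * (2 * trap_level) \<le> (z - x) / 4" .
qed

definition boost :: real where
  "boost = ln (1 / low_prob) / (slot / 2 * trap_level)"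

definition slope :: real where
  "slope = low_prob / (2 * (q_bound + 1))"

definition lam :: "nat \<Rightarrow> real \<Rightarrow> real" where
  "lam i = ramp slope boost (release i)"

lemma boost_pos: "0 < boost"
  using low_prob slot_pos trap_level(1) by (simp add: boost_def)

lemma slope_pos: "0 < slope"
  using low_prob(1) q_bound_nonneg by (simp add: slope_def)

lemma pD_low_when_boosted:
  assumes "slot / 2 \<le> t - release j" "0 \<le> t" "v \<le> - trap_level"
  shows "pD (lam j t) v \<le> low_prob"
proof -
  have "boost * (slot / 2) \<le> lam j t"
    using ramp_ge_boost[OF slope_pos less_imp_le[OF boost_pos] assms(2)] assms(1) boost_pos
    unfolding lam_def by (smt (verit) mult_left_mono)
  then have "pD (lam j t) v \<le> exp (- (boost * (slot / 2) * trap_level))"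
    using boost_pos slot_pos trap_level(1) assms(3) by (intro pD_le_exp_neg) auto
  also have "\<dots> = low_prob"
    using low_prob(1) slot_pos trap_level(1) by (simp add: boost_def ln_div)
  finally show ?thesis .
qed

lemma lam_before_release: "t \<le> release j \<Longrightarrow> lam j t = slope * (1 + t)"
  by (simp add: lam_def ramp_def)

lemma entry_level_reached_fast:
  "entry_level < margin / 2 / psi_D - (q_bound + margin / 2 / psi_D) * exp (- psi_D * (slot / 2))"
proof -
  have "1 \<le> psi_D" "0 < psi_D" by (auto simp: psi_D_def)
  have "(q_bound + margin / 2) * exp (- psi_D * (slot / 2)) \<le> margin / 2 / (2 * psi_D)"
    using slot_pos q_bound_nonneg margin(1) by (intro exp_decay_le_inverse) (auto simp: psi_D_def)
  moreover have "(q_bound + margin / 2 / psi_D) * exp (- psi_D * (slot / 2))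
                   \<le> (q_bound + margin / 2) * exp (- psi_D * (slot / 2))"
    using \<open>1 \<le> psi_D\<close> margin(1) by (intro mult_right_mono) (auto simp: divide_le_eq)
  moreover have "entry_level < margin / 2 / psi_D - margin / 2 / (2 * psi_D)"
    using margin(1) \<open>0 < psi_D\<close> by (simp add: entry_level_def field_simps)
  ultimately show ?thesis by linarith
qed

theorem params_admissible: "behavioural_params n psi (\<lambda>_. 1) lam"
  unfolding lam_def using slope_pos boost_pos psi_ge_half
  by (intro behavioural_params_ramp) (auto intro: less_le_trans[of 0 "1/2"])

lemma params_solution_exists: "\<exists>q. is_solution n G x y z w psi (\<lambda>_. 1) lam q0 q"
  unfolding lam_def using slope_pos boost_pos by (intro ramp_solution_exists) auto

end

locale efficient_run = efficient_start +
  fixes q :: "real \<Rightarrow> nat \<Rightarrow> real"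
  assumes is_solution: "is_solution n G x y z w psi (\<lambda>_. 1) lam q0 q"

sublocale efficient_run \<subseteq> eta_one_solution n G x y z w psi lam q0 q
proof
  show "is_solution n G x y z w psi (\<lambda>_. 1) lam q0 q" by (rule is_solution)
  show "\<And>i. 0 < psi i" using psi_ge_half by (rule less_le_trans[rotated]) simp
  show "\<And>i t. 0 \<le> t \<Longrightarrow> 0 \<le> lam i t"
    unfolding lam_def using slope_pos boost_pos by (auto intro: less_imp_le ramp_pos)
qed

context efficient_run
begin

lemma q_bounded: "i < n \<Longrightarrow> 0 \<le> t \<Longrightarrow> \<bar>q t i\<bar> \<le> q_bound"
proof -
  assume "i < n" "0 \<le> t"
  have "real n * gain / psi i \<le> real n * gain / (1/2)"
    using psi_ge_half[of i] gain_pos by (intro divide_left_mono) auto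
  then have "real n * gain / psi i \<le> 2 * real n * gain" by simp
  moreover have "\<bar>q0 i\<bar> \<le> (\<Sum>i<n. \<bar>q0 i\<bar>)" using \<open>i < n\<close> by (intro member_le_sum) auto
  ultimately show ?thesis
    using agent_bound[OF \<open>i < n\<close> \<open>0 \<le> t\<close>] by (simp add: q_bound_def)
qed

lemma cooperator_stays_low:
  assumes "i \<in> cooperators" "0 \<le> t" "t \<le> horizon"
  shows "q t i < - (2 * trap_level)"
proof -
  have i: "i < n" "q0 i < 0" "psi i = psi_C" using assms(1) cooperators_iff[of i]
    by (auto simp: cooperators_def psi_def)
  have "psi i * t = t / (2 * horizon)" by (simp add: i(3) psi_C_def)
  also have "\<dots> \<le> 1/2" using assms(3) horizon(1) by (simp add: divide_le_eq)
  finally have "psi i * t \<le> 1/2" .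
  moreover have "real n * gain / psi i \<le> - q0 i / 4"
    using horizon(3)[OF assms(1)] i(3) two_agents gain_pos by (simp add: psi_C_def field_simps)
  ultimately have "q t i \<le> q0 i / 4" using i assms(2) by (intro agent_stays_negative)
  then show ?thesis using trap_level(3)[OF assms(1)] by linarith
qed

lemma pD_before_release:
  assumes "j < n" "0 \<le> t" "t \<le> horizon" "t \<le> release j"
  shows "pD (lam j t) (q t j) \<le> 1/2 + low_prob"
proof -
  have "\<bar>pD (lam j t) (q t j) - 1/2\<bar> \<le> slope * (1 + t) * \<bar>q t j\<bar>"
    using pD_dist_half[of "lam j t" "q t j"] slope_pos assms(2)
    by (simp add: lam_before_release[OF assms(4)] abs_mult)
  also have "\<dots> \<le> slope * 2 * (q_bound + 1)"
    using q_bounded[OF assms(1,2)] slope_pos assms(2,3) horizon(2) by (intro mult_mono) auto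
  also have "\<dots> = low_prob" using q_bound_nonneg by (simp add: slope_def field_simps)
  finally show ?thesis by linarith
qed

lemma pD_later_defector:
  assumes "j \<in> defectors" "0 \<le> t" "t \<le> horizon"
    and released_low: "\<forall>j\<in>defectors. release j \<le> t \<longrightarrow> q t j < - entry_level"
  shows "pD (lam j t) (q t j) \<le> 1/2 + low_prob"
proof (cases "t \<le> release j")
  case True
  then show ?thesis using pD_before_release assms(1-3) defectors_lessD by blast
next
  case False
  then have "q t j \<le> 0" using released_low assms(1) entry_level_pos by force
  then have "pD (lam j t) (q t j) \<le> 1/2"
    using lam_nonneg[OF defectors_lessD[OF assms(1)] assms(2)] by (intro pD_le_half)
  then show ?thesis using low_prob(1) by linarith
qed

lemma pD_earlier_neighbour:
  assumes "k \<in> defectors" "j < n" "j \<notin> later k" "release k - slot / 2 < t" "t \<le> horizon"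
    and released_low: "\<forall>j\<in>defectors. release j \<le> t \<longrightarrow> q t j < - entry_level"
  shows "pD (lam j t) (q t j) \<le> low_prob"
proof -
  have "0 < t" using release_defector(1)[OF assms(1)] assms(4) slot_pos by linarith
  have "slot / 2 \<le> t - release j \<and> q t j \<le> - trap_level"
  proof (cases "j \<in> defectors")
    case True
    then have "rank j < rank k" using assms(3) by auto
    then have "release j + slot \<le> release k" using release_earlier True assms(1) by blast
    then show ?thesis using released_low True assms(4) trap_level(1,2) slot_pos by force
  next
    case False
    then have "j \<in> cooperators" using cooperators_iff assms(2) by blast
    then show ?thesis
      using cooperator_stays_low[of j t] False \<open>0 < t\<close> assms(5) trap_level(1)
      by (auto simp: release_def)
  qed
  then show ?thesis using \<open>0 < t\<close> by (intro pD_low_when_boosted) auto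
qed

lemma defector_drift:
  assumes "k \<in> defectors" "release k - slot / 2 < t" "t < horizon"
    and released_low: "\<forall>j\<in>defectors. release j \<le> t \<longrightarrow> q t j < - entry_level"
  shows "drift t k \<le> - psi_D * q t k - margin / 2"
proof -
  have "0 < t" using release_defector(1)[OF assms(1)] assms(2) slot_pos by linarith
  have "social_drive lam t (q t) k \<le> later_nbrs k * (x - z + gain * (1/2 + low_prob))
          + (real (deg n G k) - later_nbrs k) * (x - z + gain * low_prob)"
    using assms \<open>0 < t\<close>
    by (intro social_drive_le_split pD_later_defector pD_earlier_neighbour) (auto dest: nbrs_lessD)
  also have "\<dots> = later_nbrs k * (mid_drive + gain * low_prob)
          + (real (deg n G k) - later_nbrs k) * (x - z + gain * low_prob)"
    by (simp add: mid_drive_eq[symmetric] algebra_simps)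
  also have "\<dots> \<le> - (margin / 2)" by (rule converted_drive_bound[OF assms(1)])
  finally show ?thesis using assms(1) by (simp add: psi_def)
qed

lemma defector_low_at_horizon:
  assumes "k \<in> defectors"
  shows "q horizon k < - entry_level"
proof -
  have "\<forall>k\<in>defectors. \<forall>t. release k \<le> t \<longrightarrow> t \<le> horizon \<longrightarrow> q t k < - entry_level"
  proof (rule staggered_descent[where u' = drift and \<psi> = psi_D and h = "slot / 2"])
    fix k assume k: "k \<in> defectors"
    have "0 \<le> release k - slot / 2" using release_defector(1)[OF k] slot_pos by linarith
    then show "continuous_on {release k - slot / 2..horizon} (\<lambda>t. q t k)"
      using k by (intro continuous_on_agent_interval) (auto dest: defectors_lessD)
    show "q (release k - slot / 2) k \<le> q_bound"
      using q_bounded[OF defectors_lessD[OF k] \<open>0 \<le> release k - slot / 2\<close>] by linarith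
    fix t assume t: "release k - slot / 2 < t" "t < horizon"
    then show "((\<lambda>s. q s k) has_real_derivative drift t k) (at t)"
      using \<open>0 \<le> release k - slot / 2\<close> k by (intro has_derivative_agent) (auto dest: defectors_lessD)
    show "(\<forall>j\<in>defectors. release j \<le> t \<longrightarrow> q t j < - entry_level) \<Longrightarrow>
          drift t k \<le> - psi_D * q t k - margin / 2"
      using k t by (intro defector_drift)
  qed (use slot_pos q_bound_nonneg margin(1) entry_level_reached_fast in \<open>auto simp: psi_D_def\<close>)
  then show ?thesis using assms release_defector[OF assms] slot_pos by force
qed

lemma all_low_after_horizon: "\<forall>t\<ge>horizon. \<forall>i<n. q t i \<le> - trap_level"
proof (rule negative_invariant[where \<delta> = low_prob])
  fix i assume "i < n"
  show "q horizon i < - (2 * trap_level)"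
  proof (cases "i \<in> defectors")
    case True
    then show ?thesis using defector_low_at_horizon trap_level(2) by fastforce
  next
    case False
    then show ?thesis using cooperator_stays_low cooperators_iff \<open>i < n\<close> horizon(1) by auto
  qed
next
  fix t j assume "horizon < t" "j < n" "q t j \<le> - trap_level"
  moreover have "slot / 2 \<le> t - release j"
    using release_defector[of j] \<open>horizon < t\<close> slot_pos horizon(1) by (auto simp: release_def)
  ultimately show "pD (lam j t) (q t j) \<le> low_prob" using horizon(1) by (intro pD_low_when_boosted) auto
qed (use horizon(1) trap_level(1,4) low_prob(3) margin(2) in auto)

theorem actions_converge_to_C: "((\<lambda>t. pD (lam i t) (q t i)) \<longlongrightarrow> 0) at_top" if "i < n"
proof (intro tendsto_pD_zero)
  have "filterlim (\<lambda>t. slope * trap_level * (1 + t)) at_top at_top"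
    using slope_pos trap_level(1) by (intro filterlim_affine_at_top) simp
  moreover have "\<forall>\<^sub>F t in at_top. slope * trap_level * (1 + t) \<le> - (lam i t * q t i)"
    unfolding eventually_at_top_linorder
  proof (intro exI[of _ horizon] allI impI)
    fix t assume "horizon \<le> t"
    then have "trap_level \<le> - q t i" using all_low_after_horizon that by force
    moreover have "slope * (1 + t) \<le> lam i t"
      unfolding lam_def using boost_pos by (intro ramp_ge_slope) simp
    ultimately have "slope * (1 + t) * trap_level \<le> lam i t * (- q t i)"
      using slope_pos trap_level(1) horizon(1) \<open>horizon \<le> t\<close> lam_nonneg[OF that, of t]
      by (intro mult_mono) auto
    then show "slope * trap_level * (1 + t) \<le> - (lam i t * q t i)" by (simp add: mult_ac)
  qed
  ultimately have "filterlim (\<lambda>t. - (lam i t * q t i)) at_top at_top"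
    by (rule filterlim_at_top_mono)
  then show "filterlim (\<lambda>t. lam i t * q t i) at_bot at_top"
    by (simp add: filterlim_uminus_at_bot)
qed

end

context efficient_start
begin

theorem converges_to_C:
  "\<exists>psi eta lam. behavioural_params n psi eta lam \<and> actions_converge n G x y z w psi eta lam q0 0"
proof -
  have "\<forall>i<n. ((\<lambda>t. pD (lam i t) (q t i)) \<longlongrightarrow> 0) at_top"
    if "is_solution n G x y z w psi (\<lambda>_. 1) lam q0 q" for q
  proof -
    interpret efficient_run n G x y z w q0 q by unfold_locales (rule that)
    show ?thesis using actions_converge_to_C by blast
  qed
  then show ?thesis using params_admissible params_solution_exists unfolding actions_converge_def by blast
qed

end

theorem mainTheorem7:
  fixes n :: nat and G :: "nat \<Rightarrow> nat \<Rightarrow> bool" and x y z w :: real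
    and q0 :: "nat \<Rightarrow> real"
  assumes "n \<ge> 2"
    and "simple_graph n G" and "connected_graph n G"
    and "z > w" and "w > x" and "x > y" and "w + x > z + y" and "w > 0" and "z > 0"
    and "\<forall>i<n. q0 i \<noteq> 0"
  shows "(\<exists>psi eta lam. behavioural_params n psi eta lam \<and>
            actions_converge n G x y z w psi eta lam q0 1)
       \<and> ((\<not> (\<exists>S. S \<noteq> {} \<and> S \<subseteq> {i. i < n \<and> q0 i > 0} \<and>
                 cohesiveness n G S \<ge> 2 * (z - x) / (z - x + w - y)))
          \<longrightarrow> (\<exists>psi eta lam. behavioural_params n psi eta lam \<and>
                 actions_converge n G x y z w psi eta lam q0 0))"
proof -
  interpret coordination_game n G x y z w
    using assms by unfold_locales auto
  show ?thesis
  proof (intro conjI impI)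
    show "\<exists>psi eta lam. behavioural_params n psi eta lam \<and> actions_converge n G x y z w psi eta lam q0 1"
      by (rule converges_to_D)
  next
    assume "\<not> (\<exists>S. S \<noteq> {} \<and> S \<subseteq> {i. i < n \<and> q0 i > 0} \<and>
                 cohesiveness n G S \<ge> 2 * (z - x) / (z - x + w - y))"
    then interpret efficient_start n G x y z w q0
      using assms by unfold_locales auto
    show "\<exists>psi eta lam. behavioural_params n psi eta lam \<and> actions_converge n G x y z w psi eta lam q0 0"
      by (rule converges_to_C)
  qed
qed

end
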